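(* Fix $\nu>2$, and let $m=m(n)$ be even with $m=o(\log n)$. There exist absolute constants $c,\sigma_0>0$ and $N\in\mathbb N$ such that, for all $n\ge N$ (with $\sigma_n:=\min\{\sigma_0n^{-\frac{\nu-2}{2\nu}},1\}$, $N$ being large enough that $3\sigma_n^{2\nu/(\nu-2)}\le1$), $$\mathbb P\big(p_m^*(Z)<-2\sigma_n\big)-\mathbb P\big(p_m^*(X)<-2\sigma_n\big)\ge c\,n^{-\frac{\nu-2}{2\nu m}}.$$
   Context: Heavy-tailed law $\tilde\mu_{\nu,\sigma}$: set $p:=\sigma^{2\nu/(\nu-2)}$ and $x_0:=\sigma/\sqrt{6p}$. Let $U$ be a random variable with $\mathbb P(U=-x_0)=2p$, $\mathbb P(U=0)=1-3p$, $\mathbb P(U=2x_0)=p$, and let $Z\sim\mathcal N(0,\sigma^2)$ be independent of $U$. $\tilde\mu_{\nu,\sigma}$ is the law of $V:=2^{-1/2}U+2^{-1/2}Z$. Construction: $V_1,\dots,V_n$ i.i.d. $\tilde\mu_{\nu,\sigma_n}$, $Y_1,\dots,Y_n$ i.i.d. $\mathcal N(0,1)$ independent of the $V_i$; $X_i:=(V_i,Y_i)\in\mathbb{R}^2$, $X=(X_1,\dots,X_n)$. For $x_i=(x_{i1},x_{i2})\in\mathbb{R}^2$, $p_m^*(x_1,\dots,x_n):=\frac{1}{\sqrt n}\sum_{i=1}^nx_{i1}+\big(\frac{1}{\sqrt n}\sum_{i=1}^nx_{i2}\big)^m$. $Z=(Z_1,\dots,Z_n)$ are independent Gaussian vectors,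 independent of $X$, with $Z_i\sim\mathcal N(\mathbb E[X_i],\mathrm{Var}[X_i])=\mathcal N(0,\mathrm{diag}(\sigma_n^2,1))$. *)

theory Defs
  imports "HOL-Probability.Probability" "HOL-Library.Landau_Symbols"
begin

text \<open>Gaussian law N(mu, s^2) on the reals (s is the standard deviation).\<close>
definition gauss :: "real \<Rightarrow> real \<Rightarrow> real measure" where
  "gauss mu s = density lborel (normal_density mu s)"

definition U_pmf :: "real \<Rightarrow> real \<Rightarrow> real pmf" where
  "U_pmf nu sg =
     (let p = sg powr (2 * nu / (nu - 2)); x0 = sg / sqrt (6 * p)
      in pmf_of_list [(- x0, 2 * p), (0, 1 - 3 * p), (2 * x0, p)])"

definition mu_tilde :: "real \<Rightarrow> real \<Rightarrow> real measure" where
  "mu_tilde nu sg =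
     distr (measure_pmf (U_pmf nu sg) \<Otimes>\<^sub>M gauss 0 sg) borel
       (\<lambda>(u, z). u / sqrt 2 + z / sqrt 2)"

definition pstar :: "nat \<Rightarrow> nat \<Rightarrow> (nat \<Rightarrow> real \<times> real) \<Rightarrow> real" where
  "pstar n m x = (\<Sum>i<n. fst (x i)) / sqrt (real n) + ((\<Sum>i<n. snd (x i)) / sqrt (real n)) ^ m"

definition law_X :: "real \<Rightarrow> real \<Rightarrow> nat \<Rightarrow> (nat \<Rightarrow> real \<times> real) measure" where
  "law_X nu sg n = (\<Pi>\<^sub>M i\<in>{..<n}. mu_tilde nu sg \<Otimes>\<^sub>M gauss 0 1)"

definition law_Z :: "real \<Rightarrow> nat \<Rightarrow> (nat \<Rightarrow> real \<times> real) measure" where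
  "law_Z sg n = (\<Pi>\<^sub>M i\<in>{..<n}. gauss 0 sg \<Otimes>\<^sub>M gauss 0 1)"

definition prob_below :: "(nat \<Rightarrow> real \<times> real) measure \<Rightarrow> nat \<Rightarrow> nat \<Rightarrow> real \<Rightarrow> real" where
  "prob_below M n m t = measure M {x \<in> space M. pstar n m x < t}"

end

theory Submission
  imports Defs
begin

text \<open>Both probabilities reduce to the planar event \<open>v + g\<^sup>m < -2\<sigma>\<close> with \<open>g\<close> standard Gaussian and
  independent \<open>v\<close>: for \<open>Z\<close> the first coordinate is \<open>v ~ N(0, \<sigma>\<^sup>2)\<close>, for \<open>X\<close> it is \<open>v = L + H\<close> with
  \<open>H ~ N(0, \<sigma>\<^sup>2/2)\<close> and the sparse part \<open>L = (2n)\<^sup>-\<^sup>1\<^sup>/\<^sup>2 \<Sum> U\<^sub>i\<close>. Halving the Gaussian variance lowers the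
  probability by an absolute constant times \<open>P(g\<^sup>m \<le> \<sigma>/2) \<ge> (\<sigma>/2)\<^bsup>1/m\<^esup>/3\<close>. The sparse part is nonzero
  only with probability \<open>3pn\<close>, and on that event small-ball bounds for \<open>g\<^sup>m\<close> control its effect.
  Choosing \<open>\<sigma>\<^sub>n\<close> so that \<open>pn\<close> is a small constant makes this loss negligible, leaving a gap of order
  \<open>\<sigma>\<^sub>n\<^bsup>1/m\<^esup> \<ge> \<sigma>\<^sub>0 n\<^bsup>-(\<nu>-2)/(2\<nu>m)\<^esup>\<close>.\<close>

lemma prob_space_gauss [simp]: "s > 0 \<Longrightarrow> prob_space (gauss mu s)"
  unfolding gauss_def by (rule prob_space_normal_density)

lemma sets_gauss [simp, measurable_cong]: "sets (gauss mu s) = sets borel"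
  unfolding gauss_def by simp

lemma space_gauss [simp]: "space (gauss mu s) = UNIV"
  unfolding gauss_def by simp

lemma distributed_gauss: "distributed (gauss mu s) lborel (\<lambda>x. x) (normal_density mu s)"
proof -
  have "distr (gauss mu s) lborel (\<lambda>x. x) = distr (gauss mu s) (gauss mu s) (\<lambda>x. x)"
    by (intro distr_cong) auto
  also have "\<dots> = gauss mu s" by (rule distr_id)
  finally show ?thesis unfolding distributed_def gauss_def by simp
qed

lemma distr_gauss_scale:
  assumes "s > 0"
  shows "distr (gauss 0 1) borel (\<lambda>x. s * x) = gauss 0 s"
proof -
  interpret prob_space "gauss 0 1" by simp
  have "distributed (gauss 0 1) lborel (\<lambda>x. 0 + s * x) (normal_density (0 + s * 0) (\<bar>s\<bar> * 1))"
    using assms by (intro normal_density_affine[OF distributed_gauss]) auto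
  then have "distr (gauss 0 1) lborel (\<lambda>x. s * x) = gauss 0 s"
    using assms by (simp add: distributed_def gauss_def)
  moreover have "distr (gauss 0 1) borel (\<lambda>x. s * x) = distr (gauss 0 1) lborel (\<lambda>x. s * x)"
    by (intro distr_cong) auto
  ultimately show ?thesis by simp
qed

lemma emeasure_gauss_lessThan:
  assumes "s > 0"
  shows "emeasure (gauss 0 s) {..<y} = emeasure (gauss 0 1) {..<y / s}"
proof -
  have "emeasure (gauss 0 s) {..<y} = emeasure (gauss 0 1) ((\<lambda>x. s * x) -` {..<y})"
    by (subst distr_gauss_scale[OF assms, symmetric]) (simp add: emeasure_distr)
  also have "(\<lambda>x. s * x) -` {..<y} = {..<y / s}"
    using assms by (auto simp: field_simps)
  finally show ?thesis .
qed

lemma emeasure_std_gauss: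
  "A \<in> sets borel \<Longrightarrow> emeasure (gauss 0 1) A = (\<integral>\<^sup>+x. ennreal (normal_density 0 1 x) * indicator A x \<partial>lborel)"
  unfolding gauss_def by (simp add: emeasure_density)

lemma std_gauss_interval_lower:
  assumes "a \<le> b" and K: "\<And>x. x \<in> {a..<b} \<Longrightarrow> x\<^sup>2 \<le> 2 * K"
  shows "ennreal ((b - a) * exp (-K) / sqrt (2 * pi)) \<le> emeasure (gauss 0 1) {a..<b}"
proof -
  have "ennreal ((b - a) * exp (-K) / sqrt (2 * pi))
      = (\<integral>\<^sup>+x. ennreal (exp (-K) / sqrt (2 * pi)) * indicator {a..<b} x \<partial>lborel)"
    using \<open>a \<le> b\<close> by (subst nn_integral_cmult_indicator) (auto simp: ennreal_mult'[symmetric] mult.commute)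
  also have "\<dots> \<le> (\<integral>\<^sup>+x. ennreal (normal_density 0 1 x) * indicator {a..<b} x \<partial>lborel)"
  proof (intro nn_integral_mono)
    fix x
    show "ennreal (exp (-K) / sqrt (2 * pi)) * indicator {a..<b} x
        \<le> ennreal (normal_density 0 1 x) * indicator {a..<b} x"
    proof (cases "x \<in> {a..<b}")
      case True
      then have "exp (-K) \<le> exp (- x\<^sup>2 / 2)" using K[OF True] by simp
      then have "exp (-K) / sqrt (2 * pi) \<le> normal_density 0 1 x"
        by (simp add: std_normal_density_def divide_right_mono)
      then show ?thesis using True by (simp add: ennreal_leI)
    qed simp
  qed
  also have "\<dots> = emeasure (gauss 0 1) {a..<b}" by (simp add: emeasure_std_gauss)
  finally show ?thesis .
qed

lemma std_gauss_le_radius: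
  assumes "r \<ge> 0" and "S \<subseteq> {-r..r}" and "S \<in> sets borel"
  shows "emeasure (gauss 0 1) S \<le> ennreal r"
proof -
  have density_le: "normal_density 0 1 x \<le> 1 / 2" for x
  proof -
    have "2 \<le> sqrt (2 * pi)" using pi_gt3 by (simp add: real_le_rsqrt)
    then have "1 / sqrt (2 * pi) * exp (- x\<^sup>2 / 2) \<le> 1 / 2 * 1"
      by (intro mult_mono divide_left_mono) auto
    then show ?thesis by (simp add: std_normal_density_def)
  qed
  have "emeasure (gauss 0 1) S \<le> emeasure (gauss 0 1) {-r..r}"
    using assms by (intro emeasure_mono) auto
  also have "\<dots> \<le> (\<integral>\<^sup>+x. ennreal (1 / 2) * indicator {-r..r} x \<partial>lborel)"
    unfolding emeasure_std_gauss[OF borel_closed[OF closed_atLeastAtMost]]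
    by (intro nn_integral_mono mult_right_mono ennreal_leI density_le) auto
  also have "\<dots> = ennreal (1 / 2) * ennreal (2 * r)"
    using \<open>r \<ge> 0\<close> by (subst nn_integral_cmult_indicator) auto
  also have "\<dots> = ennreal (1 / 2 * (2 * r))"
    by (rule ennreal_mult'[symmetric]) simp
  finally show ?thesis by simp
qed

lemma nn_integral_gauss_square:
  assumes "s > 0"
  shows "(\<integral>\<^sup>+z. ennreal (z\<^sup>2) \<partial>gauss 0 s) = ennreal (s\<^sup>2)"
proof -
  have "(\<integral>\<^sup>+z. ennreal (z\<^sup>2) \<partial>gauss 0 s)
      = (\<integral>\<^sup>+z. ennreal (normal_density 0 s z * (z - 0) ^ (2 * 1)) \<partial>lborel)"
    unfolding gauss_def by (subst nn_integral_density) (auto simp: ennreal_mult'[symmetric])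
  also have "\<dots> = ennreal (integral\<^sup>L lborel (\<lambda>z. normal_density 0 s z * (z - 0) ^ (2 * 1)))"
    using assms by (intro nn_integral_eq_integral integrable_normal_moment AE_I2) auto
  also have "integral\<^sup>L lborel (\<lambda>z. normal_density 0 s z * (z - 0) ^ (2 * 1)) = s\<^sup>2"
    using assms by (subst integral_normal_moment_even) (auto simp: power2_eq_square)
  finally show ?thesis .
qed

lemma indep_vars_PiM_components:
  assumes "I \<noteq> {}" and M: "\<And>i. i \<in> I \<Longrightarrow> prob_space (M i)"
  shows "prob_space.indep_vars (PiM I M) M (\<lambda>i \<omega>. \<omega> i) I"
proof -
  interpret P: prob_space "PiM I M" by (intro prob_space_PiM M)
  show ?thesis
  proof (subst P.indep_vars_iff_distr_eq_PiM'[OF \<open>I \<noteq> {}\<close>])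
    show "\<And>i. i \<in> I \<Longrightarrow> (\<lambda>\<omega>. \<omega> i) \<in> measurable (PiM I M) (M i)"
      by (rule measurable_component_singleton)
    have "distr (PiM I M) (PiM I M) (\<lambda>x. \<lambda>i\<in>I. x i) = distr (PiM I M) (PiM I M) (\<lambda>x. x)"
      by (intro distr_cong refl) (auto simp: space_PiM PiE_def extensional_restrict)
    also have "\<dots> = PiM I (\<lambda>i. distr (PiM I M) (M i) (\<lambda>\<omega>. \<omega> i))"
      by (simp add: distr_id distr_PiM_component M cong: PiM_cong)
    finally show "distr (PiM I M) (PiM I M) (\<lambda>x. \<lambda>i\<in>I. x i) = PiM I (\<lambda>i. distr (PiM I M) (M i) (\<lambda>\<omega>. \<omega> i))" .
  qed
qed

lemma distr_sum_iid_gauss: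
  assumes I: "finite I" "I \<noteq> {}" and s: "s > 0" and c: "c > 0"
  shows "distr (PiM I (\<lambda>_. gauss 0 s)) borel (\<lambda>x. (\<Sum>i\<in>I. x i) / c) = gauss 0 (s * sqrt (card I) / c)"
proof -
  let ?P = "PiM I (\<lambda>_. gauss 0 s)"
  interpret P: prob_space ?P by (intro prob_space_PiM) (simp add: s)
  have "P.indep_vars (\<lambda>_. gauss 0 s) (\<lambda>i \<omega>. \<omega> i) I"
    by (rule indep_vars_PiM_components[OF I(2)]) (simp add: s)
  then have indep: "P.indep_vars (\<lambda>_. borel) (\<lambda>i \<omega>. \<omega> i / c) I"
    by (rule P.indep_vars_compose2[where Y="\<lambda>i y. y / c"]) simp
  have "distributed ?P lborel (\<lambda>\<omega>. \<omega> i / c) (normal_density 0 (s / c))" if "i \<in> I" for i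
  proof -
    have "distr ?P lborel (\<lambda>\<omega>. \<omega> i) = distr ?P (gauss 0 s) (\<lambda>\<omega>. \<omega> i)"
      by (intro distr_cong) auto
    also have "\<dots> = gauss 0 s" using that s by (intro distr_PiM_component) auto
    finally have "distributed ?P lborel (\<lambda>\<omega>. \<omega> i) (normal_density 0 s)"
      unfolding distributed_def gauss_def using that by auto
    from P.normal_density_affine[OF this s, of "1/c" 0] show ?thesis
      using c by (simp add: field_simps)
  qed
  then have "distributed ?P lborel (\<lambda>x. \<Sum>i\<in>I. x i / c) (normal_density (\<Sum>i\<in>I. 0) (sqrt (\<Sum>i\<in>I. (s / c)\<^sup>2)))"
    by (intro P.sum_indep_normal[OF I indep]) (use s c in auto)
  moreover have "sqrt (\<Sum>i\<in>I. (s / c)\<^sup>2) = s * sqrt (card I) / c"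
    using s c by (simp add: real_sqrt_mult power_divide real_sqrt_divide)
  ultimately have "distr ?P lborel (\<lambda>x. \<Sum>i\<in>I. x i / c) = gauss 0 (s * sqrt (card I) / c)"
    by (simp add: distributed_def gauss_def)
  moreover have "distr ?P borel (\<lambda>x. (\<Sum>i\<in>I. x i) / c) = distr ?P lborel (\<lambda>x. \<Sum>i\<in>I. x i / c)"
    by (intro distr_cong) (auto simp: sum_divide_distrib)
  ultimately show ?thesis by simp
qed

lemma powr_inverse_le_max_one:
  fixes x :: real
  assumes "0 \<le> x" and "m > 0"
  shows "x powr (1 / real m) \<le> max 1 x"
proof (cases "x \<le> 1")
  case True
  then show ?thesis using assms by (simp add: powr_le1)
next
  case False
  then have "x powr (1 / real m) \<le> x powr 1" using assms by (intro powr_mono) auto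
  then show ?thesis using False by simp
qed

lemma le_powr_inverse:
  fixes x :: real
  assumes "0 \<le> x" "x \<le> 1" "m > 0"
  shows "x \<le> x powr (1 / real m)"
proof -
  have "x powr 1 \<le> x powr (1 / real m)"
    using assms by (intro powr_mono') (auto simp: divide_simps)
  then show ?thesis using assms by simp
qed

lemma even_power_le_iff:
  fixes g y :: real
  assumes "even m" "m > 0" and "y > 0"
  shows "g ^ m \<le> y \<longleftrightarrow> \<bar>g\<bar> \<le> y powr (1 / real m)"
proof -
  have "g ^ m = \<bar>g\<bar> ^ m" using assms by (simp add: power_even_abs)
  moreover have "y = (y powr (1 / real m)) ^ m"
    using assms by (simp add: powr_realpow[symmetric] powr_powr)
  moreover have "\<bar>g\<bar> ^ m \<le> (y powr (1 / real m)) ^ m \<longleftrightarrow> \<bar>g\<bar> \<le> y powr (1 / real m)"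
    using assms by (intro power_mono_iff) auto
  ultimately show ?thesis by metis
qed

lemma even_power_less_iff:
  fixes g y :: real
  assumes "even m" "m > 0" and "y > 0"
  shows "g ^ m < y \<longleftrightarrow> \<bar>g\<bar> < y powr (1 / real m)"
proof -
  have "g ^ m = \<bar>g\<bar> ^ m" using assms by (simp add: power_even_abs)
  moreover have "y = (y powr (1 / real m)) ^ m"
    using assms by (simp add: powr_realpow[symmetric] powr_powr)
  moreover have "\<not> (y powr (1 / real m)) ^ m \<le> \<bar>g\<bar> ^ m \<longleftrightarrow> \<not> y powr (1 / real m) \<le> \<bar>g\<bar>"
    using assms by (subst power_mono_iff) auto
  ultimately show ?thesis by (metis not_le)
qed

lemma std_gauss_even_power_less:
  fixes y :: real
  assumes m: "even m" "m > 0" and "y \<ge> 0"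
  shows "emeasure (gauss 0 1) {g. g ^ m < y} \<le> ennreal (y powr (1 / real m))"
proof (cases "y = 0")
  case True
  have "0 \<le> g ^ m" for g :: real using zero_le_even_power[OF m(1)] by blast
  then have "{g::real. g ^ m < y} = {}" using True m(1) by (simp add: not_less)
  then show ?thesis by simp
next
  case False
  with \<open>y \<ge> 0\<close> have "y > 0" by simp
  show ?thesis
  proof (rule std_gauss_le_radius)
    show "{g. g ^ m < y} \<subseteq> {- (y powr (1 / real m))..y powr (1 / real m)}"
    proof
      fix g assume "g \<in> {g. g ^ m < y}"
      then have "\<bar>g\<bar> < y powr (1 / real m)" using even_power_less_iff[OF m \<open>y > 0\<close>] by simp
      then show "g \<in> {- (y powr (1 / real m))..y powr (1 / real m)}" by (auto simp: abs_less_iff)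
    qed
    show "{g::real. g ^ m < y} \<in> sets borel" by measurable
    show "0 \<le> y powr (1 / real m)" by simp
  qed
qed

lemma std_gauss_even_power_le_lower:
  fixes y :: real
  assumes m: "even m" "m > 0" and y: "y > 0" "y \<le> 1"
  shows "ennreal (y powr (1 / real m) / 3) \<le> emeasure (gauss 0 1) {g. g ^ m \<le> y}"
proof -
  define r where "r = y powr (1 / real m)"
  have r0: "r > 0" using y by (simp add: r_def)
  have r1: "r \<le> 1" unfolding r_def using y m by (intro powr_le1) auto
  have "1 + (-(1/2)) \<le> exp (-(1/2)::real)" by (rule exp_ge_add_one_self)
  then have "r * 1 \<le> (2 * r) * exp (-(1/2))"
    using r0 by (simp add: mult.assoc)
  moreover have "sqrt (2 * pi) \<le> (3::real)"
    using pi_less_4 by (intro real_sqrt_le_iff[THEN iffD2, of _ 9, simplified]) linarith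
  ultimately have "r / 3 \<le> (2 * r) * exp (-(1/2)) / sqrt (2 * pi)"
    using r0 by (intro frac_le) auto
  then have "ennreal (r / 3) \<le> ennreal ((r - - r) * exp (-(1/2)) / sqrt (2 * pi))"
    by (intro ennreal_leI) simp
  also have "\<dots> \<le> emeasure (gauss 0 1) {-r..<r}"
  proof (rule std_gauss_interval_lower)
    show "-r \<le> r" using r0 by simp
    fix x :: real assume "x \<in> {-r..<r}"
    then have "\<bar>x\<bar>\<^sup>2 \<le> 1\<^sup>2" using r1 by (intro power_mono) auto
    then show "x\<^sup>2 \<le> 2 * (1/2)" by simp
  qed
  also have "\<dots> \<le> emeasure (gauss 0 1) {g. g ^ m \<le> y}"
  proof (rule emeasure_mono)
    show "{-r..<r} \<subseteq> {g. g ^ m \<le> y}"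
    proof
      fix g assume "g \<in> {-r..<r}"
      then have "\<bar>g\<bar> \<le> r" by auto
      then show "g \<in> {g. g ^ m \<le> y}" using even_power_le_iff[OF m y(1), of g] by (simp add: r_def)
    qed
    show "{g::real. g ^ m \<le> y} \<in> sets (gauss 0 1)" by simp
  qed
  finally show ?thesis by (simp add: r_def)
qed

section \<open>Products of pairs of independent coordinates\<close>

lemma measurable_PiM_fst:
  "(\<lambda>\<omega>. \<lambda>i\<in>I. fst (\<omega> i)) \<in> measurable (PiM I (\<lambda>_. A \<Otimes>\<^sub>M B)) (PiM I (\<lambda>_. A))"
proof (rule measurable_restrict)
  fix i assume "i \<in> I"
  from measurable_compose[OF measurable_component_singleton[OF this, of "\<lambda>_. A \<Otimes>\<^sub>M B"] measurable_fst]
  show "(\<lambda>\<omega>. fst (\<omega> i)) \<in> measurable (PiM I (\<lambda>_. A \<Otimes>\<^sub>M B)) A" by simp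
qed

lemma measurable_PiM_snd:
  "(\<lambda>\<omega>. \<lambda>i\<in>I. snd (\<omega> i)) \<in> measurable (PiM I (\<lambda>_. A \<Otimes>\<^sub>M B)) (PiM I (\<lambda>_. B))"
proof (rule measurable_restrict)
  fix i assume "i \<in> I"
  from measurable_compose[OF measurable_component_singleton[OF this, of "\<lambda>_. A \<Otimes>\<^sub>M B"] measurable_snd]
  show "(\<lambda>\<omega>. snd (\<omega> i)) \<in> measurable (PiM I (\<lambda>_. A \<Otimes>\<^sub>M B)) B" by simp
qed

lemma borel_measurable_PiM_sum_div:
  assumes "(\<lambda>x. x) \<in> borel_measurable M"
  shows "(\<lambda>x. (\<Sum>i\<in>I. x i) / c) \<in> borel_measurable (PiM I (\<lambda>_. M :: real measure))"
proof (intro borel_measurable_divide borel_measurable_sum)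
  fix i assume "i \<in> I"
  from measurable_compose[OF measurable_component_singleton[OF this, of "\<lambda>_. M"] assms]
  show "(\<lambda>x. x i) \<in> borel_measurable (PiM I (\<lambda>_. M))" by simp
qed simp

lemma measurable_PiM_pair_split:
  fixes A B :: "'a measure"
  defines "N \<equiv> (\<lambda>(i, b). if b then A else B)"
  shows "(\<lambda>\<omega>. \<lambda>(i, b)\<in>I \<times> UNIV. if b then fst (\<omega> i) else snd (\<omega> i))
    \<in> measurable (PiM I (\<lambda>_. A \<Otimes>\<^sub>M B)) (PiM (I \<times> UNIV) N)"
proof (rule measurable_restrict)
  fix j assume "j \<in> I \<times> (UNIV :: bool set)"
  then obtain i b where j: "j = (i, b)" "i \<in> I" by auto
  note \<omega>i = measurable_component_singleton[OF j(2), of "\<lambda>_. A \<Otimes>\<^sub>M B"]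
  show "(\<lambda>\<omega>. case j of (i, b) \<Rightarrow> if b then fst (\<omega> i) else snd (\<omega> i))
      \<in> measurable (PiM I (\<lambda>_. A \<Otimes>\<^sub>M B)) (N j)"
    using measurable_compose[OF \<omega>i measurable_fst] measurable_compose[OF \<omega>i measurable_snd] j
    by (cases b) (simp_all add: N_def)
qed

lemma PiM_pair_split_vimage_PiE:
  assumes CA: "\<And>i. i \<in> I \<Longrightarrow> C (i, True) \<in> sets A" and CB: "\<And>i. i \<in> I \<Longrightarrow> C (i, False) \<in> sets B"
  shows "(\<lambda>\<omega>. \<lambda>(i, b)\<in>I \<times> UNIV. if b then fst (\<omega> i) else snd (\<omega> i)) -` (PiE (I \<times> UNIV) C)
      \<inter> space (PiM I (\<lambda>_. A \<Otimes>\<^sub>M B)) = PiE I (\<lambda>i. C (i, True) \<times> C (i, False))"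
proof (intro set_eqI iffI)
  fix \<omega> assume "\<omega> \<in> (\<lambda>\<omega>. \<lambda>(i, b)\<in>I \<times> UNIV. if b then fst (\<omega> i) else snd (\<omega> i)) -` (PiE (I \<times> UNIV) C)
      \<inter> space (PiM I (\<lambda>_. A \<Otimes>\<^sub>M B))"
  then have 1: "\<And>i b. i \<in> I \<Longrightarrow> (if b then fst (\<omega> i) else snd (\<omega> i)) \<in> C (i, b)"
    and 2: "\<omega> \<in> extensional I"
    by (auto simp: space_PiM PiE_iff)
  show "\<omega> \<in> PiE I (\<lambda>i. C (i, True) \<times> C (i, False))"
    using 1[of _ True] 1[of _ False] 2 by (auto simp: PiE_iff mem_Times_iff)
next
  fix \<omega> assume \<omega>: "\<omega> \<in> PiE I (\<lambda>i. C (i, True) \<times> C (i, False))"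
  have "\<omega> \<in> space (PiM I (\<lambda>_. A \<Otimes>\<^sub>M B))"
    using \<omega> CA[THEN sets.sets_into_space] CB[THEN sets.sets_into_space]
    by (auto simp: space_PiM PiE_iff space_pair_measure mem_Times_iff) (meson subsetD)+
  then show "\<omega> \<in> (\<lambda>\<omega>. \<lambda>(i, b)\<in>I \<times> UNIV. if b then fst (\<omega> i) else snd (\<omega> i)) -` (PiE (I \<times> UNIV) C)
      \<inter> space (PiM I (\<lambda>_. A \<Otimes>\<^sub>M B))"
    using \<omega> by (auto simp: PiE_iff mem_Times_iff)
qed

text \<open>The pairs \<open>(a\<^sub>i, b\<^sub>i)\<close> are split into the \<open>2|I|\<close> coordinates indexed by \<open>I \<times> UNIV\<close>, which are
  independent; this is what makes the two marginal sums independent below.\<close>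

lemma distr_PiM_pair_split:
  fixes A B :: "'a measure" and I :: "'i set"
  assumes I: "finite I" and A: "prob_space A" and B: "prob_space B"
  defines "N \<equiv> (\<lambda>(i, b). if b then A else B)"
  shows "distr (PiM I (\<lambda>_. A \<Otimes>\<^sub>M B)) (PiM (I \<times> UNIV) N)
     (\<lambda>\<omega>. \<lambda>(i, b)\<in>I \<times> UNIV. if b then fst (\<omega> i) else snd (\<omega> i)) = PiM (I \<times> UNIV) N"
proof -
  interpret A: prob_space A by fact
  interpret B: prob_space B by fact
  interpret AB: pair_prob_space A B ..
  have N_simps [simp]: "N (i, True) = A" "N (i, False) = B" for i by (simp_all add: N_def)
  have "prob_space (N j)" for j using A B by (auto simp: N_def split: prod.splits)
  then have PN: "product_sigma_finite N"
    by (intro product_prob_space.axioms(1) product_prob_spaceI)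
  have PP: "product_sigma_finite (\<lambda>_::'i. A \<Otimes>\<^sub>M B)"
    by (intro product_prob_space.axioms(1) product_prob_spaceI) (simp add: AB.prob_space_axioms)
  let ?P = "PiM I (\<lambda>_. A \<Otimes>\<^sub>M B)"
  let ?split = "\<lambda>\<omega>. \<lambda>(i, b)\<in>I \<times> (UNIV::bool set). if b then fst (\<omega> i) else snd (\<omega> i)"
  show ?thesis
  proof (rule product_sigma_finite.PiM_eqI[OF PN])
    show "finite (I \<times> (UNIV::bool set))" using I by simp
    show "sets (distr ?P (PiM (I \<times> UNIV) N) ?split) = sets (PiM (I \<times> UNIV) N)" by simp
    fix C assume C: "\<And>j. j \<in> I \<times> (UNIV::bool set) \<Longrightarrow> C j \<in> sets (N j)"
    have CA: "i \<in> I \<Longrightarrow> C (i, True) \<in> sets A" and CB: "i \<in> I \<Longrightarrow> C (i, False) \<in> sets B" for i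
      using C[of "(i, True)"] C[of "(i, False)"] by simp_all
    have "emeasure (distr ?P (PiM (I \<times> UNIV) N) ?split) (PiE (I \<times> UNIV) C)
        = emeasure ?P (PiE I (\<lambda>i. C (i, True) \<times> C (i, False)))"
      using measurable_PiM_pair_split[where A=A and B=B and I=I] C
      by (subst emeasure_distr) (auto simp: N_def PiM_pair_split_vimage_PiE[OF CA CB] intro!: sets_PiM_I_finite I)
    also have "\<dots> = (\<Prod>i\<in>I. emeasure A (C (i, True)) * emeasure B (C (i, False)))"
      using CA CB I by (simp add: product_sigma_finite.emeasure_PiM[OF PP] B.emeasure_pair_measure_Times)
    also have "\<dots> = (\<Prod>i\<in>I. \<Prod>b\<in>UNIV. emeasure (N (i, b)) (C (i, b)))"
      by (intro prod.cong refl) (simp add: UNIV_bool mult.commute)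
    also have "\<dots> = (\<Prod>j\<in>I \<times> UNIV. emeasure (N j) (C j))"
      by (simp add: prod.cartesian_product)
    finally show "emeasure (distr ?P (PiM (I \<times> UNIV) N) ?split) (PiE (I \<times> UNIV) C)
        = (\<Prod>j\<in>I \<times> UNIV. emeasure (N j) (C j))" .
  qed
qed

lemma measurable_PiM_slice:
  assumes "I \<times> {b} \<subseteq> K"
  shows "(\<lambda>\<xi>. \<lambda>i\<in>I. \<xi> (i, b)) \<in> measurable (PiM K N) (PiM I (\<lambda>i. N (i, b)))"
proof (rule measurable_restrict)
  fix i assume "i \<in> I"
  with assms have "(i, b) \<in> K" by auto
  from measurable_component_singleton[OF this, of N]
  show "(\<lambda>\<xi>. \<xi> (i, b)) \<in> measurable (PiM K N) (N (i, b))" .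
qed

lemma distr_PiM_slice:
  assumes N: "\<And>j. prob_space (N j)" and F: "F \<in> borel_measurable (PiM I (\<lambda>i. N (i, b)))"
  shows "distr (PiM (I \<times> {b}) N) borel (\<lambda>\<xi>. F (\<lambda>i\<in>I. \<xi> (i, b))) = distr (PiM I (\<lambda>i. N (i, b))) borel F"
proof -
  have "distr (PiM (I \<times> {b}) N) borel (F \<circ> (\<lambda>\<xi>. \<lambda>i\<in>I. \<xi> (i, b)))
      = distr (distr (PiM (I \<times> {b}) N) (PiM I (\<lambda>i. N (i, b))) (\<lambda>\<xi>. \<lambda>i\<in>I. \<xi> (i, b))) borel F"
    using measurable_PiM_slice[of I b "I \<times> {b}" N] F by (intro distr_distr[symmetric]) auto
  also have "distr (PiM (I \<times> {b}) N) (PiM I (\<lambda>i. N (i, b))) (\<lambda>\<xi>. \<lambda>i\<in>I. \<xi> (i, b)) = PiM I (\<lambda>i. N (i, b))"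
    using distr_PiM_reindex[of "I \<times> {b}" N "\<lambda>i. (i, b)" I] N by (simp add: inj_on_def)
  finally show ?thesis unfolding comp_def .
qed

lemma distr_PiM_bool_slices:
  fixes A B :: "'a measure" and I :: "'i set" and F G :: "('i \<Rightarrow> 'a) \<Rightarrow> real"
  assumes I: "finite I" and A: "prob_space A" and B: "prob_space B"
    and F: "F \<in> borel_measurable (PiM I (\<lambda>_. A))" and G: "G \<in> borel_measurable (PiM I (\<lambda>_. B))"
  defines "N \<equiv> (\<lambda>(i, b). if b then A else B)"
  shows "distr (PiM (I \<times> UNIV) N) (borel \<Otimes>\<^sub>M borel) (\<lambda>\<xi>. (F (\<lambda>i\<in>I. \<xi> (i, True)), G (\<lambda>i\<in>I. \<xi> (i, False))))
    = distr (PiM I (\<lambda>_. A)) borel F \<Otimes>\<^sub>M distr (PiM I (\<lambda>_. B)) borel G"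
proof -
  have N_simps [simp]: "N (i, True) = A" "N (i, False) = B" for i by (simp_all add: N_def)
  have pN: "prob_space (N j)" for j using A B by (auto simp: N_def split: prod.splits)
  have PN: "product_sigma_finite N"
    by (intro product_prob_space.axioms(1) product_prob_spaceI pN)
  define J1 where "J1 = I \<times> {True}"
  define J2 where "J2 = I \<times> {False}"
  have J12: "J1 \<union> J2 = I \<times> UNIV" "J1 \<inter> J2 = {}" "finite J1" "finite J2"
    using I by (auto simp: J1_def J2_def)
  define r1 where "r1 = (\<lambda>\<xi>::'i \<times> bool \<Rightarrow> 'a. \<lambda>i\<in>I. \<xi> (i, True))"
  define r2 where "r2 = (\<lambda>\<xi>::'i \<times> bool \<Rightarrow> 'a. \<lambda>i\<in>I. \<xi> (i, False))"
  have r1m: "r1 \<in> measurable (PiM K N) (PiM I (\<lambda>_. A))" if "I \<times> {True} \<subseteq> K" for K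
    using measurable_PiM_slice[OF that, of N] by (simp add: r1_def)
  have r2m: "r2 \<in> measurable (PiM K N) (PiM I (\<lambda>_. B))" if "I \<times> {False} \<subseteq> K" for K
    using measurable_PiM_slice[OF that, of N] by (simp add: r2_def)
  have Hm: "(\<lambda>\<xi>. (F (r1 \<xi>), G (r2 \<xi>))) \<in> measurable (PiM (I \<times> UNIV) N) (borel \<Otimes>\<^sub>M borel)"
    by (intro measurable_Pair measurable_compose[OF r1m F] measurable_compose[OF r2m G]) auto
  have merge_eq: "PiM (I \<times> UNIV) N = distr (PiM J1 N \<Otimes>\<^sub>M PiM J2 N) (PiM (I \<times> UNIV) N) (merge J1 J2)"
    using product_sigma_finite.distr_merge[OF PN J12(2-4)] J12(1) by simp
  have "distr (PiM (I \<times> UNIV) N) (borel \<Otimes>\<^sub>M borel) (\<lambda>\<xi>. (F (r1 \<xi>), G (r2 \<xi>)))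
      = distr (distr (PiM J1 N \<Otimes>\<^sub>M PiM J2 N) (PiM (I \<times> UNIV) N) (merge J1 J2)) (borel \<Otimes>\<^sub>M borel)
          (\<lambda>\<xi>. (F (r1 \<xi>), G (r2 \<xi>)))"
    by (subst merge_eq) (rule refl)
  also have "\<dots> = distr (PiM J1 N \<Otimes>\<^sub>M PiM J2 N) (borel \<Otimes>\<^sub>M borel) ((\<lambda>\<xi>. (F (r1 \<xi>), G (r2 \<xi>))) \<circ> merge J1 J2)"
    using measurable_merge[of J1 J2 N] J12(1) by (intro distr_distr Hm) simp
  also have "\<dots> = distr (PiM J1 N \<Otimes>\<^sub>M PiM J2 N) (borel \<Otimes>\<^sub>M borel) (\<lambda>(x, y). (F (r1 x), G (r2 y)))"
  proof (intro distr_cong refl)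
    fix z :: "('i \<times> bool \<Rightarrow> 'a) \<times> ('i \<times> bool \<Rightarrow> 'a)"
    obtain x y where z: "z = (x, y)" by (cases z)
    have "r1 (merge J1 J2 (x, y)) = r1 x" "r2 (merge J1 J2 (x, y)) = r2 y"
      by (auto simp: r1_def r2_def J1_def J2_def merge_def restrict_def fun_eq_iff)
    then show "((\<lambda>\<xi>. (F (r1 \<xi>), G (r2 \<xi>))) \<circ> merge J1 J2) z = (case z of (x, y) \<Rightarrow> (F (r1 x), G (r2 y)))"
      by (simp add: z)
  qed
  also have "\<dots> = distr (PiM J1 N) borel (F \<circ> r1) \<Otimes>\<^sub>M distr (PiM J2 N) borel (G \<circ> r2)"
  proof (subst pair_measure_distr)
    show "F \<circ> r1 \<in> borel_measurable (PiM J1 N)" using r1m[of J1] F by (auto simp: J1_def)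
    show "G \<circ> r2 \<in> borel_measurable (PiM J2 N)" using r2m[of J2] G by (auto simp: J2_def)
    have "prob_space (PiM J2 N)" by (intro prob_space_PiM pN)
    then show "sigma_finite_measure (distr (PiM J2 N) borel (G \<circ> r2))"
      using r2m[of J2] G
      by (intro prob_space.prob_space_distr prob_space_imp_sigma_finite) (auto simp: J2_def)
  qed (simp add: case_prod_beta)
  also have "distr (PiM J1 N) borel (F \<circ> r1) = distr (PiM I (\<lambda>_. A)) borel F"
    using distr_PiM_slice[of N F I True] pN F by (simp add: J1_def r1_def comp_def)
  also have "distr (PiM J2 N) borel (G \<circ> r2) = distr (PiM I (\<lambda>_. B)) borel G"
    using distr_PiM_slice[of N G I False] pN G by (simp add: J2_def r2_def comp_def)
  finally show ?thesis unfolding r1_def r2_def .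
qed

lemma distr_PiM_pair_fst_snd:
  fixes A B :: "'a measure" and I :: "'i set" and F G :: "('i \<Rightarrow> 'a) \<Rightarrow> real"
  assumes I: "finite I" and A: "prob_space A" and B: "prob_space B"
    and F: "F \<in> borel_measurable (PiM I (\<lambda>_. A))" and G: "G \<in> borel_measurable (PiM I (\<lambda>_. B))"
  shows "distr (PiM I (\<lambda>_. A \<Otimes>\<^sub>M B)) (borel \<Otimes>\<^sub>M borel)
      (\<lambda>\<omega>. (F (\<lambda>i\<in>I. fst (\<omega> i)), G (\<lambda>i\<in>I. snd (\<omega> i))))
    = distr (PiM I (\<lambda>_. A)) borel F \<Otimes>\<^sub>M distr (PiM I (\<lambda>_. B)) borel G"
proof -
  define N where "N = (\<lambda>(i::'i, b::bool). if b then A else B)"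
  let ?P = "PiM I (\<lambda>_. A \<Otimes>\<^sub>M B)"
  let ?split = "\<lambda>\<omega>. \<lambda>(i, b)\<in>I \<times> (UNIV::bool set). if b then fst (\<omega> i) else snd (\<omega> i)"
  let ?H = "\<lambda>\<xi>. (F (\<lambda>i\<in>I. \<xi> (i, True)), G (\<lambda>i\<in>I. \<xi> (i, False)))"
  have "?H \<in> measurable (PiM (I \<times> UNIV) N) (borel \<Otimes>\<^sub>M borel)"
    using measurable_PiM_slice[of I True "I \<times> UNIV" N] measurable_PiM_slice[of I False "I \<times> UNIV" N]
    by (intro measurable_Pair measurable_compose[OF _ F] measurable_compose[OF _ G]) (auto simp: N_def)
  then have "distr (distr ?P (PiM (I \<times> UNIV) N) ?split) (borel \<Otimes>\<^sub>M borel) ?H = distr ?P (borel \<Otimes>\<^sub>M borel) (?H \<circ> ?split)"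
    using measurable_PiM_pair_split[where A=A and B=B and I=I] by (intro distr_distr) (simp_all add: N_def)
  also have "\<dots> = distr ?P (borel \<Otimes>\<^sub>M borel) (\<lambda>\<omega>. (F (\<lambda>i\<in>I. fst (\<omega> i)), G (\<lambda>i\<in>I. snd (\<omega> i))))"
    by (intro distr_cong refl)
      (simp add: restrict_def; intro conjI arg_cong[where f=F] arg_cong[where f=G] ext; simp)
  finally show ?thesis
    unfolding N_def distr_PiM_pair_split[OF I A B] distr_PiM_bool_slices[OF I A B F G] by simp
qed

lemma measure_PiM_pair_fst_snd:
  fixes A B :: "'a measure" and I :: "'i set" and F G :: "('i \<Rightarrow> 'a) \<Rightarrow> real"
  assumes I: "finite I" and A: "prob_space A" and B: "prob_space B"
    and F: "F \<in> borel_measurable (PiM I (\<lambda>_. A))" and G: "G \<in> borel_measurable (PiM I (\<lambda>_. B))"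
    and E: "E \<in> sets (borel \<Otimes>\<^sub>M borel)"
  shows "measure (PiM I (\<lambda>_. A \<Otimes>\<^sub>M B))
      ((\<lambda>\<omega>. (F (\<lambda>i\<in>I. fst (\<omega> i)), G (\<lambda>i\<in>I. snd (\<omega> i)))) -` E \<inter> space (PiM I (\<lambda>_. A \<Otimes>\<^sub>M B)))
    = measure (distr (PiM I (\<lambda>_. A)) borel F \<Otimes>\<^sub>M distr (PiM I (\<lambda>_. B)) borel G) E"
proof -
  have "(\<lambda>\<omega>. (F (\<lambda>i\<in>I. fst (\<omega> i)), G (\<lambda>i\<in>I. snd (\<omega> i))))
      \<in> measurable (PiM I (\<lambda>_. A \<Otimes>\<^sub>M B)) (borel \<Otimes>\<^sub>M borel)"
    by (intro measurable_Pair measurable_compose[OF measurable_PiM_fst F]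
        measurable_compose[OF measurable_PiM_snd G])
  then show ?thesis
    by (simp add: measure_distr[symmetric] E distr_PiM_pair_fst_snd[OF I A B F G])
qed

section \<open>Reduction to two dimensions\<close>

definition tail_event :: "nat \<Rightarrow> real \<Rightarrow> (real \<times> real) set" where
  "tail_event m \<sigma> = {p. fst p + snd p ^ m < -2 * \<sigma>}"

lemma tail_event_in_sets:
  assumes "sets M1 = sets borel" "sets M2 = sets borel"
  shows "tail_event m \<sigma> \<in> sets (M1 \<Otimes>\<^sub>M M2)"
proof -
  have "{p \<in> space (borel \<Otimes>\<^sub>M borel). fst p + snd p ^ m < -2 * (\<sigma>::real)} \<in> sets (borel \<Otimes>\<^sub>M borel)"
    by measurable
  then show ?thesis
    using sets_pair_measure_cong[OF assms] by (simp add: tail_event_def space_pair_measure)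
qed

lemma prob_below_law_Z:
  assumes "n \<ge> 1" and "\<sigma> > 0"
  shows "prob_below (law_Z \<sigma> n) n m (-2 * \<sigma>) = measure (gauss 0 \<sigma> \<Otimes>\<^sub>M gauss 0 1) (tail_event m \<sigma>)"
proof -
  define F where "F = (\<lambda>x::nat \<Rightarrow> real. (\<Sum>i<n. x i) / sqrt (real n))"
  have F_measurable: "F \<in> borel_measurable (PiM {..<n} (\<lambda>_. gauss 0 s))" for s
    unfolding F_def by measurable
  have F_gauss: "distr (PiM {..<n} (\<lambda>_. gauss 0 s)) borel F = gauss 0 s" if "s > 0" for s
    unfolding F_def using distr_sum_iid_gauss[of "{..<n}" s "sqrt (real n)"] that assms(1)
    by (simp add: lessThan_empty_iff)
  have "{x \<in> space (law_Z \<sigma> n). pstar n m x < -2 * \<sigma>}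
      = (\<lambda>\<omega>. (F (\<lambda>i\<in>{..<n}. fst (\<omega> i)), F (\<lambda>i\<in>{..<n}. snd (\<omega> i)))) -` tail_event m \<sigma> \<inter> space (law_Z \<sigma> n)"
    by (auto simp: pstar_def F_def tail_event_def)
  then show ?thesis
    unfolding prob_below_def law_Z_def
    using measure_PiM_pair_fst_snd[OF _ _ _ F_measurable F_measurable tail_event_in_sets] assms
    by (simp add: F_gauss)
qed

lemma sets_mu_tilde [simp, measurable_cong]: "sets (mu_tilde nu \<sigma>) = sets borel"
  unfolding mu_tilde_def by simp

lemma measurable_mu_tilde_sum:
  "(\<lambda>(u, z). u / sqrt 2 + z / sqrt 2) \<in> measurable (measure_pmf (U_pmf nu \<sigma>) \<Otimes>\<^sub>M gauss 0 s) (mu_tilde nu \<sigma>)"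
proof -
  let ?UG = "measure_pmf (U_pmf nu \<sigma>) \<Otimes>\<^sub>M gauss 0 s"
  have "fst \<in> borel_measurable ?UG"
    using measurable_compose[OF measurable_fst, of "\<lambda>y. y" "measure_pmf (U_pmf nu \<sigma>)" borel "gauss 0 s"]
    by simp
  moreover have "snd \<in> borel_measurable ?UG"
    using measurable_compose[OF measurable_snd, of "\<lambda>y. y" "gauss 0 s" borel]
    by (simp add: measurable_ident_sets)
  ultimately have "(\<lambda>(u, z). u / sqrt 2 + z / sqrt 2) \<in> borel_measurable ?UG"
    unfolding split_beta' by (intro borel_measurable_add borel_measurable_divide) auto
  then show ?thesis by (simp add: measurable_cong_sets[OF refl sets_mu_tilde])
qed

lemma distr_mu_tilde:
  "distr (measure_pmf (U_pmf nu \<sigma>) \<Otimes>\<^sub>M gauss 0 \<sigma>) (mu_tilde nu \<sigma>) (\<lambda>(u, z). u / sqrt 2 + z / sqrt 2)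
    = mu_tilde nu \<sigma>"
  unfolding mu_tilde_def by (intro distr_cong) auto

lemma prob_space_mu_tilde:
  assumes "\<sigma> > 0"
  shows "prob_space (mu_tilde nu \<sigma>)"
proof -
  interpret G: prob_space "gauss 0 \<sigma>" using assms by simp
  interpret UG: pair_prob_space "measure_pmf (U_pmf nu \<sigma>)" "gauss 0 \<sigma>" ..
  show ?thesis
    using UG.prob_space_distr[OF measurable_mu_tilde_sum] by (simp only: distr_mu_tilde)
qed

lemma measurable_compose_mu_tilde_sum:
  "compose I (\<lambda>(u, z). u / sqrt 2 + z / sqrt 2)
    \<in> measurable (PiM I (\<lambda>_. measure_pmf (U_pmf nu \<sigma>) \<Otimes>\<^sub>M gauss 0 s)) (PiM I (\<lambda>_. mu_tilde nu \<sigma>))"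
  unfolding compose_def
proof (rule measurable_restrict)
  fix i assume "i \<in> I"
  from measurable_compose[OF measurable_component_singleton[OF this] measurable_mu_tilde_sum]
  show "(\<lambda>x. case x i of (u, z) \<Rightarrow> u / sqrt 2 + z / sqrt 2)
      \<in> measurable (PiM I (\<lambda>_. measure_pmf (U_pmf nu \<sigma>) \<Otimes>\<^sub>M gauss 0 s)) (mu_tilde nu \<sigma>)" .
qed

lemma PiM_mu_tilde:
  assumes "finite I" and "\<sigma> > 0"
  shows "PiM I (\<lambda>_. mu_tilde nu \<sigma>) = distr (PiM I (\<lambda>_. measure_pmf (U_pmf nu \<sigma>) \<Otimes>\<^sub>M gauss 0 \<sigma>))
      (PiM I (\<lambda>_. mu_tilde nu \<sigma>)) (compose I (\<lambda>(u, z). u / sqrt 2 + z / sqrt 2))"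
proof -
  interpret G: prob_space "gauss 0 \<sigma>" using assms(2) by simp
  interpret UG: pair_prob_space "measure_pmf (U_pmf nu \<sigma>)" "gauss 0 \<sigma>" ..
  show ?thesis
    using distr_PiM_finite_prob_space'[of I "\<lambda>_. measure_pmf (U_pmf nu \<sigma>) \<Otimes>\<^sub>M gauss 0 \<sigma>"
        "\<lambda>_. mu_tilde nu \<sigma>" "\<lambda>(u, z). u / sqrt 2 + z / sqrt 2"] assms
    by (simp add: UG.prob_space_axioms prob_space_mu_tilde measurable_mu_tilde_sum distr_mu_tilde)
qed

text \<open>Summing the decomposition \<open>V\<^sub>i = U\<^sub>i/\<surd>2 + Z\<^sub>i/\<surd>2\<close> splits the normalised sum of the \<open>V\<^sub>i\<close>
  into the sparse part \<open>L\<close> plus an independent \<open>N(0, \<sigma>\<^sup>2/2)\<close> variable.\<close>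

lemma distr_sum_mu_tilde:
  fixes nu \<sigma> :: real
  assumes "n \<ge> 1" and "\<sigma> > 0"
  defines "L \<equiv> distr (PiM {..<n} (\<lambda>_. measure_pmf (U_pmf nu \<sigma>))) borel
      (\<lambda>x. (\<Sum>i<n. x i) / (sqrt 2 * sqrt (real n)))"
  shows "distr (PiM {..<n} (\<lambda>_. mu_tilde nu \<sigma>)) borel (\<lambda>x. (\<Sum>i<n. x i) / sqrt (real n))
    = convolution L (gauss 0 (\<sigma> / sqrt 2))"
proof -
  let ?I = "{..<n}"
  let ?U = "measure_pmf (U_pmf nu \<sigma>)"
  let ?UG = "?U \<Otimes>\<^sub>M gauss 0 \<sigma>"
  let ?V = "mu_tilde nu \<sigma>"
  define h where "h = (\<lambda>(u::real, z::real). u / sqrt 2 + z / sqrt 2)"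
  define F2 where "F2 = (\<lambda>x::nat \<Rightarrow> real. (\<Sum>i\<in>?I. x i) / (sqrt 2 * sqrt (real n)))"
  have compose_measurable: "compose ?I h \<in> measurable (PiM ?I (\<lambda>_. ?UG)) (PiM ?I (\<lambda>_. ?V))"
    unfolding h_def by (rule measurable_compose_mu_tilde_sum)
  have PiM_V: "PiM ?I (\<lambda>_. ?V) = distr (PiM ?I (\<lambda>_. ?UG)) (PiM ?I (\<lambda>_. ?V)) (compose ?I h)"
    unfolding h_def using assms(2) by (intro PiM_mu_tilde) auto
  have F2_measurable: "F2 \<in> borel_measurable (PiM ?I (\<lambda>_. M))" if "(\<lambda>x. x) \<in> borel_measurable M" for M
    unfolding F2_def using that by (rule borel_measurable_PiM_sum_div)
  have add_measurable: "(\<lambda>(a, b). a + b) \<in> borel_measurable (borel \<Otimes>\<^sub>M (borel :: real measure))"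
    by measurable
  have "distr (PiM ?I (\<lambda>_. ?V)) borel (\<lambda>x. (\<Sum>i<n. x i) / sqrt (real n))
      = distr (PiM ?I (\<lambda>_. ?UG)) borel ((\<lambda>x. (\<Sum>i<n. x i) / sqrt (real n)) \<circ> compose ?I h)"
    by (subst PiM_V)
      (intro distr_distr compose_measurable borel_measurable_PiM_sum_div; simp add: measurable_ident_sets)
  also have "\<dots> = distr (PiM ?I (\<lambda>_. ?UG)) borel
      ((\<lambda>(a, b). a + b) \<circ> (\<lambda>\<omega>. (F2 (\<lambda>i\<in>?I. fst (\<omega> i)), F2 (\<lambda>i\<in>?I. snd (\<omega> i)))))"
    by (intro distr_cong refl)
      (simp add: F2_def compose_def h_def split_beta sum.distrib add_divide_distrib
        flip: sum_divide_distrib)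
  also have "\<dots> = distr (distr (PiM ?I (\<lambda>_. ?UG)) (borel \<Otimes>\<^sub>M borel)
      (\<lambda>\<omega>. (F2 (\<lambda>i\<in>?I. fst (\<omega> i)), F2 (\<lambda>i\<in>?I. snd (\<omega> i))))) borel (\<lambda>(a, b). a + b)"
    by (intro distr_distr[symmetric] add_measurable measurable_Pair
        measurable_compose[OF measurable_PiM_fst F2_measurable]
        measurable_compose[OF measurable_PiM_snd F2_measurable]) (simp_all add: measurable_ident_sets)
  also have "\<dots> = convolution L (distr (PiM ?I (\<lambda>_. gauss 0 \<sigma>)) borel F2)"
    unfolding convolution_def L_def F2_def[symmetric]
    by (subst distr_PiM_pair_fst_snd)
      (auto intro!: F2_measurable simp: measure_pmf.prob_space_axioms assms(2) measurable_ident_sets)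
  also have "distr (PiM ?I (\<lambda>_. gauss 0 \<sigma>)) borel F2 = gauss 0 (\<sigma> / sqrt 2)"
    unfolding F2_def using assms by (subst distr_sum_iid_gauss) (auto simp: lessThan_empty_iff)
  finally show ?thesis .
qed

lemma prob_below_law_X:
  fixes nu \<sigma> :: real
  assumes "n \<ge> 1" and "\<sigma> > 0"
  defines "L \<equiv> distr (PiM {..<n} (\<lambda>_. measure_pmf (U_pmf nu \<sigma>))) borel
      (\<lambda>x. (\<Sum>i<n. x i) / (sqrt 2 * sqrt (real n)))"
  shows "prob_below (law_X nu \<sigma> n) n m (-2 * \<sigma>)
     = measure (convolution L (gauss 0 (\<sigma> / sqrt 2)) \<Otimes>\<^sub>M gauss 0 1) (tail_event m \<sigma>)"
proof -
  define F where "F = (\<lambda>x::nat \<Rightarrow> real. (\<Sum>i<n. x i) / sqrt (real n))"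
  have F_measurable: "F \<in> borel_measurable (PiM {..<n} (\<lambda>_. M))" if "sets M = sets borel" for M
    unfolding F_def using that by (intro borel_measurable_PiM_sum_div) (simp add: measurable_ident_sets)
  have "distr (PiM {..<n} (\<lambda>_. gauss 0 1)) borel F = gauss 0 1"
    unfolding F_def using assms(1) by (subst distr_sum_iid_gauss) (auto simp: lessThan_empty_iff)
  moreover have "{x \<in> space (law_X nu \<sigma> n). pstar n m x < -2 * \<sigma>}
      = (\<lambda>\<omega>. (F (\<lambda>i\<in>{..<n}. fst (\<omega> i)), F (\<lambda>i\<in>{..<n}. snd (\<omega> i)))) -` tail_event m \<sigma>
        \<inter> space (law_X nu \<sigma> n)"
    by (auto simp: pstar_def F_def tail_event_def)
  ultimately show ?thesis
    unfolding prob_below_def law_X_def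
    using measure_PiM_pair_fst_snd[OF _ prob_space_mu_tilde _ F_measurable F_measurable tail_event_in_sets] assms
    by (simp add: F_def distr_sum_mu_tilde L_def)
qed

section \<open>Comparison of the two tail probabilities\<close>

lemma gauss_window_constant: "1/1000 \<le> (2 * sqrt 2 - 5/2) * exp (-4) / sqrt (2 * pi :: real)"
proof -
  have "7/5 \<le> sqrt (2::real)" by (rule real_le_rsqrt) (simp add: power2_eq_square)
  then have a: "3/10 \<le> 2 * sqrt 2 - (5/2::real)" by linarith
  have "exp (4::real) = exp (of_nat 4 * 1)" by simp
  also have "\<dots> = exp 1 ^ 4" by (rule exp_of_nat_mult)
  also have "\<dots> \<le> 3 ^ 4" by (intro power_mono exp_le) auto
  finally have "inverse (81::real) \<le> inverse (exp 4)" by (intro le_imp_inverse_le) auto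
  then have "1/81 \<le> exp (-4::real)" by (simp add: exp_minus inverse_eq_divide)
  with a have "(3/10) * (1/81) \<le> (2 * sqrt 2 - 5/2) * exp (-4::real)"
    by (intro mult_mono) auto
  moreover have "sqrt (2 * pi) \<le> (3::real)"
    using pi_less_4 by (intro real_sqrt_le_iff[THEN iffD2, of _ 9, simplified]) linarith
  ultimately have "(3/10) * (1/81) / 3 \<le> (2 * sqrt 2 - 5/2) * exp (-4) / sqrt (2 * pi :: real)"
    using a by (intro frac_le) auto
  moreover have "(3/10) * (1/81) / 3 = (1/810::real)" by simp
  ultimately show ?thesis by linarith
qed

text \<open>Halving the variance of a centred Gaussian lowers each of its left tails, and by an absolute
  amount on the window \<open>[-5\<sigma>/2, -2\<sigma>]\<close>: there the difference contains the standard Gaussian mass of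
  \<open>[-2\<surd>2, -5/2]\<close>.\<close>

lemma gauss_lessThan_gain:
  fixes \<sigma> y :: real
  assumes s: "\<sigma> > 0" and y: "y \<le> 0"
  shows "emeasure (gauss 0 (\<sigma> / sqrt 2)) {..<y} + ennreal (1/1000) * indicator {-5/2*\<sigma>..-2*\<sigma>} y
     \<le> emeasure (gauss 0 \<sigma>) {..<y}"
proof -
  let ?G = "gauss 0 1"
  have L: "emeasure (gauss 0 (\<sigma> / sqrt 2)) {..<y} = emeasure ?G {..<sqrt 2 * y / \<sigma>}"
    using s by (subst emeasure_gauss_lessThan) (simp_all add: mult.commute)
  have R: "emeasure (gauss 0 \<sigma>) {..<y} = emeasure ?G {..<y / \<sigma>}"
    using s by (rule emeasure_gauss_lessThan)
  have "sqrt 2 * y \<le> 1 * y" using y by (intro mult_right_mono_neg) auto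
  then have le: "sqrt 2 * y / \<sigma> \<le> y / \<sigma>"
    using s by (intro divide_right_mono) auto
  then have split: "{..<y / \<sigma>} = {..<sqrt 2 * y / \<sigma>} \<union> {sqrt 2 * y / \<sigma>..<y / \<sigma>}" by auto
  have R2: "emeasure ?G {..<y / \<sigma>} = emeasure ?G {..<sqrt 2 * y / \<sigma>} + emeasure ?G {sqrt 2 * y / \<sigma>..<y / \<sigma>}"
    unfolding split by (intro plus_emeasure[symmetric]) auto
  have "ennreal (1/1000) * indicator {-5/2*\<sigma>..-2*\<sigma>} y \<le> emeasure ?G {sqrt 2 * y / \<sigma>..<y / \<sigma>}"
  proof (cases "y \<in> {-5/2*\<sigma>..-2*\<sigma>}")
    case True
    have "sqrt 2 * y \<le> sqrt 2 * (-2 * \<sigma>)"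
      using True by (intro mult_left_mono) auto
    then have "sqrt 2 * y / \<sigma> \<le> - 2 * sqrt 2"
      using s by (simp add: pos_divide_le_eq)
    moreover have "-5/2 \<le> y / \<sigma>"
      using True s by (auto simp: field_simps)
    ultimately have window: "{- 2 * sqrt 2..<-5/2} \<subseteq> {sqrt 2 * y / \<sigma>..<y / \<sigma>}" by auto
    have "7/5 \<le> sqrt (2::real)" by (rule real_le_rsqrt) (simp add: power2_eq_square)
    have "ennreal (1/1000) \<le> ennreal ((-5/2 - (- 2 * sqrt 2)) * exp (-4) / sqrt (2 * pi))"
      using gauss_window_constant by (intro ennreal_leI) simp
    also have "\<dots> \<le> emeasure ?G {- 2 * sqrt 2..<-5/2}"
    proof (rule std_gauss_interval_lower)
      show "- 2 * sqrt 2 \<le> (-5/2::real)" using \<open>7/5 \<le> sqrt 2\<close> by simp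
      fix x :: real assume "x \<in> {- 2 * sqrt 2..<-5/2}"
      then have "\<bar>x\<bar>\<^sup>2 \<le> (2 * sqrt 2)\<^sup>2" by (intro power_mono) auto
      then show "x\<^sup>2 \<le> 2 * 4" by (simp add: power_mult_distrib)
    qed
    also have "\<dots> \<le> emeasure ?G {sqrt 2 * y / \<sigma>..<y / \<sigma>}"
      by (intro emeasure_mono window) auto
    finally show ?thesis using True by simp
  qed simp
  then show ?thesis unfolding L R R2 by (intro add_left_mono)
qed

text \<open>The gain survives the perturbation \<open>g\<^sup>m\<close> whenever \<open>g\<^sup>m \<le> \<sigma>/2\<close>, an event of probability
  at least \<open>(\<sigma>/2)\<^bsup>1/m\<^esup>/3\<close>.\<close>

lemma tail_event_gauss_gain:
  fixes \<sigma> :: real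
  assumes s: "\<sigma> > 0" "\<sigma> \<le> 1" and m: "even m" "m > 0"
  shows "emeasure (gauss 0 (\<sigma> / sqrt 2) \<Otimes>\<^sub>M gauss 0 1) (tail_event m \<sigma>)
      + ennreal (1/1000) * ennreal ((\<sigma>/2) powr (1 / real m) / 3)
    \<le> emeasure (gauss 0 \<sigma> \<Otimes>\<^sub>M gauss 0 1) (tail_event m \<sigma>)"
proof -
  let ?G = "gauss 0 1" and ?GZ = "gauss 0 \<sigma>" and ?GH = "gauss 0 (\<sigma> / sqrt 2)"
  let ?E = "tail_event m \<sigma>"
  interpret G: prob_space ?G by simp
  interpret GZ: prob_space ?GZ using s by simp
  interpret GH: prob_space ?GH using s by simp
  interpret PZ: pair_prob_space ?GZ ?G ..
  interpret PH: pair_prob_space ?GH ?G ..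
  define S where "S = {g::real. g ^ m \<le> \<sigma> / 2}"
  have S_sets: "S \<in> sets ?G" unfolding S_def by simp
  have EZ: "?E \<in> sets (?GZ \<Otimes>\<^sub>M ?G)" and EH: "?E \<in> sets (?GH \<Otimes>\<^sub>M ?G)"
    by (simp_all add: tail_event_in_sets)
  have slice: "(\<lambda>x. (x, g)) -` ?E = {..< -2 * \<sigma> - g ^ m}" for g
    by (auto simp: tail_event_def)
  have "emeasure (?GH \<Otimes>\<^sub>M ?G) ?E + ennreal (1/1000) * emeasure ?G S
      = (\<integral>\<^sup>+g. emeasure ?GH ((\<lambda>x. (x, g)) -` ?E) \<partial>?G) + (\<integral>\<^sup>+g. ennreal (1/1000) * indicator S g \<partial>?G)"
    by (simp add: PH.emeasure_pair_measure_alt2[OF EH] nn_integral_cmult_indicator[OF S_sets])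
  also have "\<dots> = (\<integral>\<^sup>+g. emeasure ?GH ((\<lambda>x. (x, g)) -` ?E) + ennreal (1/1000) * indicator S g \<partial>?G)"
    by (rule nn_integral_add[symmetric]) (use PH.measurable_emeasure_Pair2[OF EH] S_sets in auto)
  also have "\<dots> \<le> (\<integral>\<^sup>+g. emeasure ?GZ ((\<lambda>x. (x, g)) -` ?E) \<partial>?G)"
  proof (intro nn_integral_mono)
    fix g :: real
    have gm: "0 \<le> g ^ m" using zero_le_even_power[OF m(1)] by blast
    then have "indicator S g = (indicator {-5/2*\<sigma>..-2*\<sigma>} (-2 * \<sigma> - g ^ m) :: ennreal)"
      by (auto simp: S_def indicator_def)
    then show "emeasure ?GH ((\<lambda>x. (x, g)) -` ?E) + ennreal (1/1000) * indicator S g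
        \<le> emeasure ?GZ ((\<lambda>x. (x, g)) -` ?E)"
      unfolding slice using gauss_lessThan_gain[OF s(1), of "-2 * \<sigma> - g ^ m"] gm s by simp
  qed
  also have "\<dots> = emeasure (?GZ \<Otimes>\<^sub>M ?G) ?E"
    by (rule PZ.emeasure_pair_measure_alt2[OF EZ, symmetric])
  finally have main: "emeasure (?GH \<Otimes>\<^sub>M ?G) ?E + ennreal (1/1000) * emeasure ?G S \<le> emeasure (?GZ \<Otimes>\<^sub>M ?G) ?E" .
  have "ennreal ((\<sigma>/2) powr (1 / real m) / 3) \<le> emeasure ?G S"
    unfolding S_def using s by (intro std_gauss_even_power_le_lower m) auto
  then have "emeasure (?GH \<Otimes>\<^sub>M ?G) ?E + ennreal (1/1000) * ennreal ((\<sigma>/2) powr (1 / real m) / 3)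
      \<le> emeasure (?GH \<Otimes>\<^sub>M ?G) ?E + ennreal (1/1000) * emeasure ?G S"
    by (intro add_left_mono mult_left_mono) auto
  then show ?thesis using main by (rule order_trans)
qed

lemma root_abs_le_quadratic:
  fixes \<sigma> z :: real
  assumes s: "\<sigma> > 0" and m: "m > 0"
  shows "(2 * \<bar>z\<bar>) powr (1 / real m) \<le> \<sigma> powr (1 / real m) + \<sigma> powr (1 / real m) / \<sigma>\<^sup>2 * z\<^sup>2"
proof -
  let ?a = "\<sigma> powr (1 / real m)"
  have a0: "?a > 0" using s by simp
  define x where "x = 2 * \<bar>z\<bar> / \<sigma>"
  have x0: "0 \<le> x" using s by (simp add: x_def)
  have "2 * \<bar>z\<bar> = \<sigma> * x" using s by (simp add: x_def)
  then have scale: "(2 * \<bar>z\<bar>) powr (1 / real m) = ?a * x powr (1 / real m)"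
    using s x0 by (simp add: powr_mult)
  have "2 * \<bar>z\<bar> * \<sigma> \<le> \<sigma>\<^sup>2 + z\<^sup>2"
    using sum_squares_bound[of "\<bar>z\<bar>" \<sigma>] by (simp add: add.commute)
  then have "2 * \<bar>z\<bar> * \<sigma> / \<sigma>\<^sup>2 \<le> (\<sigma>\<^sup>2 + z\<^sup>2) / \<sigma>\<^sup>2"
    using s by (intro divide_right_mono) auto
  moreover have "2 * \<bar>z\<bar> * \<sigma> / \<sigma>\<^sup>2 = x" using s by (simp add: x_def power2_eq_square)
  moreover have "(\<sigma>\<^sup>2 + z\<^sup>2) / \<sigma>\<^sup>2 = 1 + z\<^sup>2 / \<sigma>\<^sup>2" using s by (simp add: add_divide_distrib)
  ultimately have "x \<le> 1 + z\<^sup>2 / \<sigma>\<^sup>2" by simp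
  then have "max 1 x \<le> 1 + z\<^sup>2 / \<sigma>\<^sup>2" by simp
  with powr_inverse_le_max_one[OF x0 m] have "x powr (1 / real m) \<le> 1 + z\<^sup>2 / \<sigma>\<^sup>2" by (rule order_trans)
  then have "?a * x powr (1 / real m) \<le> ?a * (1 + z\<^sup>2 / \<sigma>\<^sup>2)"
    using a0 by (intro mult_left_mono) auto
  also have "\<dots> = ?a + ?a / \<sigma>\<^sup>2 * z\<^sup>2" by (simp add: algebra_simps)
  finally show ?thesis unfolding scale .
qed

lemma nn_integral_gauss_root_abs:
  fixes \<sigma> :: real
  assumes s: "\<sigma> > 0" and m: "m > 0"
  shows "(\<integral>\<^sup>+z. ennreal ((2 * \<bar>z\<bar>) powr (1 / real m)) \<partial>gauss 0 (\<sigma> / sqrt 2))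
    \<le> ennreal (3/2 * \<sigma> powr (1 / real m))"
proof -
  let ?a = "\<sigma> powr (1 / real m)"
  have a0: "?a > 0" using s by simp
  interpret GH: prob_space "gauss 0 (\<sigma> / sqrt 2)" using s by simp
  have "(\<integral>\<^sup>+z. ennreal ((2 * \<bar>z\<bar>) powr (1 / real m)) \<partial>gauss 0 (\<sigma> / sqrt 2))
      \<le> (\<integral>\<^sup>+z. ennreal ?a + ennreal (?a / \<sigma>\<^sup>2) * ennreal (z\<^sup>2) \<partial>gauss 0 (\<sigma> / sqrt 2))"
  proof (intro nn_integral_mono)
    fix z :: real
    have "ennreal ((2 * \<bar>z\<bar>) powr (1 / real m)) \<le> ennreal (?a + ?a / \<sigma>\<^sup>2 * z\<^sup>2)"
      by (intro ennreal_leI root_abs_le_quadratic s m)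
    also have "\<dots> = ennreal ?a + ennreal (?a / \<sigma>\<^sup>2 * z\<^sup>2)"
      using a0 s by (intro ennreal_plus) auto
    also have "ennreal (?a / \<sigma>\<^sup>2 * z\<^sup>2) = ennreal (?a / \<sigma>\<^sup>2) * ennreal (z\<^sup>2)"
      using a0 s by (intro ennreal_mult) auto
    finally show "ennreal ((2 * \<bar>z\<bar>) powr (1 / real m)) \<le> ennreal ?a + ennreal (?a / \<sigma>\<^sup>2) * ennreal (z\<^sup>2)" .
  qed
  also have "\<dots> = (\<integral>\<^sup>+z. ennreal ?a \<partial>gauss 0 (\<sigma> / sqrt 2))
      + (\<integral>\<^sup>+z. ennreal (?a / \<sigma>\<^sup>2) * ennreal (z\<^sup>2) \<partial>gauss 0 (\<sigma> / sqrt 2))"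
    by (rule nn_integral_add) auto
  also have "(\<integral>\<^sup>+z. ennreal ?a \<partial>gauss 0 (\<sigma> / sqrt 2)) = ennreal ?a"
    using GH.emeasure_space_1 by simp
  also have "(\<integral>\<^sup>+z. ennreal (?a / \<sigma>\<^sup>2) * ennreal (z\<^sup>2) \<partial>gauss 0 (\<sigma> / sqrt 2))
      = ennreal (?a / \<sigma>\<^sup>2) * ennreal ((\<sigma> / sqrt 2)\<^sup>2)"
    using s by (subst nn_integral_cmult) (auto simp: nn_integral_gauss_square)
  also have "ennreal (?a / \<sigma>\<^sup>2) * ennreal ((\<sigma> / sqrt 2)\<^sup>2) = ennreal (?a / \<sigma>\<^sup>2 * (\<sigma> / sqrt 2)\<^sup>2)"
    using a0 s by (intro ennreal_mult[symmetric]) auto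
  also have "ennreal ?a + \<dots> = ennreal (?a + ?a / \<sigma>\<^sup>2 * (\<sigma> / sqrt 2)\<^sup>2)"
    using a0 s by (intro ennreal_plus[symmetric]) auto
  also have "?a + ?a / \<sigma>\<^sup>2 * (\<sigma> / sqrt 2)\<^sup>2 = 3/2 * ?a"
  proof -
    have "?a / \<sigma>\<^sup>2 * (\<sigma>\<^sup>2 / 2) = ?a / 2" using s by (simp add: field_simps)
    then show ?thesis by (simp add: power_divide)
  qed
  finally show ?thesis .
qed

lemma std_gauss_shifted_tail_le:
  assumes "\<sigma> > 0" and m: "even m" "m > 0"
  shows "emeasure (gauss 0 1) (Pair (u + z) -` tail_event m \<sigma>)
    \<le> ennreal ((2 * \<bar>u\<bar>) powr (1 / real m)) + ennreal ((2 * \<bar>z\<bar>) powr (1 / real m))"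
proof -
  have "Pair (u + z) -` tail_event m \<sigma> \<subseteq> {g. g ^ m < 2 * \<bar>u\<bar>} \<union> {g. g ^ m < 2 * \<bar>z\<bar>}"
  proof
    fix g assume "g \<in> Pair (u + z) -` tail_event m \<sigma>"
    then have "u + z + g ^ m < -2 * \<sigma>" by (simp add: tail_event_def)
    then have "g ^ m < \<bar>u\<bar> + \<bar>z\<bar>" using \<open>\<sigma> > 0\<close> by linarith
    then show "g \<in> {g. g ^ m < 2 * \<bar>u\<bar>} \<union> {g. g ^ m < 2 * \<bar>z\<bar>}" by auto
  qed
  moreover have "{g::real. g ^ m < c} \<in> sets borel" for c by measurable
  ultimately have "emeasure (gauss 0 1) (Pair (u + z) -` tail_event m \<sigma>)
      \<le> emeasure (gauss 0 1) ({g. g ^ m < 2 * \<bar>u\<bar>} \<union> {g. g ^ m < 2 * \<bar>z\<bar>})"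
    by (intro emeasure_mono) auto
  also have "\<dots> \<le> emeasure (gauss 0 1) {g. g ^ m < 2 * \<bar>u\<bar>} + emeasure (gauss 0 1) {g. g ^ m < 2 * \<bar>z\<bar>}"
    by (intro emeasure_subadditive) auto
  also have "\<dots> \<le> ennreal ((2 * \<bar>u\<bar>) powr (1 / real m)) + ennreal ((2 * \<bar>z\<bar>) powr (1 / real m))"
    by (intro add_mono std_gauss_even_power_less m) auto
  finally show ?thesis .
qed

lemma nn_integral_shifted_tail_le:
  fixes \<sigma> u :: real
  assumes \<sigma>: "\<sigma> > 0" and m: "even m" "m > 0"
  shows "(\<integral>\<^sup>+z. emeasure (gauss 0 1) (Pair (u + z) -` tail_event m \<sigma>) \<partial>gauss 0 (\<sigma> / sqrt 2))
    \<le> emeasure (gauss 0 (\<sigma> / sqrt 2) \<Otimes>\<^sub>M gauss 0 1) (tail_event m \<sigma>)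
      + indicator {u. u \<noteq> 0} u * ennreal ((2 * \<bar>u\<bar>) powr (1 / real m))
      + indicator {u. u \<noteq> 0} u * ennreal (3/2 * \<sigma> powr (1 / real m))"
proof (cases "u = 0")
  case True
  interpret G: prob_space "gauss 0 1" by simp
  show ?thesis
    using True by (simp add: G.emeasure_pair_measure_alt tail_event_in_sets)
next
  case False
  interpret H: prob_space "gauss 0 (\<sigma> / sqrt 2)" using \<sigma> by simp
  have "(\<integral>\<^sup>+z. emeasure (gauss 0 1) (Pair (u + z) -` tail_event m \<sigma>) \<partial>gauss 0 (\<sigma> / sqrt 2))
      \<le> (\<integral>\<^sup>+z. ennreal ((2 * \<bar>u\<bar>) powr (1 / real m)) + ennreal ((2 * \<bar>z\<bar>) powr (1 / real m))
        \<partial>gauss 0 (\<sigma> / sqrt 2))"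
    by (intro nn_integral_mono std_gauss_shifted_tail_le[OF \<sigma> m])
  also have "\<dots> = ennreal ((2 * \<bar>u\<bar>) powr (1 / real m))
      + (\<integral>\<^sup>+z. ennreal ((2 * \<bar>z\<bar>) powr (1 / real m)) \<partial>gauss 0 (\<sigma> / sqrt 2))"
    using H.emeasure_space_1 by (subst nn_integral_add) auto
  also have "\<dots> \<le> ennreal ((2 * \<bar>u\<bar>) powr (1 / real m)) + ennreal (3/2 * \<sigma> powr (1 / real m))"
    by (intro add_left_mono nn_integral_gauss_root_abs \<sigma> m(2))
  finally show ?thesis
    using False by (simp add: add.assoc add_increasing)
qed

lemma tail_event_convolution_le:
  fixes \<sigma> s e :: real and L :: "real measure"
  assumes \<sigma>: "\<sigma> > 0" and m: "even m" "m > 0"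
    and L: "prob_space L" and sets_L: "sets L = sets borel"
    and nonzero: "emeasure L {u. u \<noteq> 0} \<le> ennreal s"
    and moment: "(\<integral>\<^sup>+u. indicator {u. u \<noteq> 0} u * ennreal ((2 * \<bar>u\<bar>) powr (1 / real m)) \<partial>L) \<le> ennreal e"
  shows "emeasure (convolution L (gauss 0 (\<sigma> / sqrt 2)) \<Otimes>\<^sub>M gauss 0 1) (tail_event m \<sigma>)
     \<le> emeasure (gauss 0 (\<sigma> / sqrt 2) \<Otimes>\<^sub>M gauss 0 1) (tail_event m \<sigma>) + ennreal e
       + ennreal s * ennreal (3/2 * \<sigma> powr (1 / real m))"
proof -
  let ?G = "gauss 0 1" and ?H = "gauss 0 (\<sigma> / sqrt 2)"
  let ?E = "tail_event m \<sigma>"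
  let ?nz = "{u::real. u \<noteq> 0}"
  note [measurable_cong] = sets_L
  interpret G: prob_space ?G by simp
  interpret H: prob_space ?H using \<sigma> by simp
  interpret L: prob_space L by fact
  define R where "R = emeasure (?H \<Otimes>\<^sub>M ?G) ?E"
  define c where "c = ennreal (3/2 * \<sigma> powr (1 / real m))"
  define f where "f = (\<lambda>x. emeasure ?G (Pair x -` ?E))"
  have f_measurable: "f \<in> borel_measurable borel"
    unfolding f_def by (rule G.measurable_emeasure_Pair) (simp add: tail_event_in_sets)
  have "emeasure (convolution L ?H \<Otimes>\<^sub>M ?G) ?E = (\<integral>\<^sup>+x. f x \<partial>convolution L ?H)"
    unfolding f_def by (rule G.emeasure_pair_measure_alt) (simp add: tail_event_in_sets)
  also have "\<dots> = (\<integral>\<^sup>+u. \<integral>\<^sup>+z. f (u + z) \<partial>?H \<partial>L)"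
    using sets_L f_measurable
    by (intro nn_integral_convolution) (auto simp: L.finite_measure_axioms H.finite_measure_axioms)
  also have "\<dots> \<le> (\<integral>\<^sup>+u. R + indicator ?nz u * ennreal ((2 * \<bar>u\<bar>) powr (1 / real m)) + indicator ?nz u * c \<partial>L)"
    unfolding f_def R_def c_def by (intro nn_integral_mono nn_integral_shifted_tail_le \<sigma> m)
  also have "\<dots> = (\<integral>\<^sup>+u. R \<partial>L) + (\<integral>\<^sup>+u. indicator ?nz u * ennreal ((2 * \<bar>u\<bar>) powr (1 / real m)) \<partial>L)
      + (\<integral>\<^sup>+u. indicator ?nz u * c \<partial>L)"
    by (subst nn_integral_add, simp, simp, subst nn_integral_add) auto
  also have "\<dots> = R + (\<integral>\<^sup>+u. indicator ?nz u * ennreal ((2 * \<bar>u\<bar>) powr (1 / real m)) \<partial>L) + c * emeasure L ?nz"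
    using L.emeasure_space_1 by (simp add: nn_integral_cmult_indicator mult.commute)
  also have "\<dots> \<le> R + ennreal e + c * ennreal s"
    by (intro add_mono mult_left_mono moment nonzero order_refl zero_le)
  finally show ?thesis unfolding R_def c_def by (simp only: mult.commute)
qed

lemma tail_event_gap:
  fixes \<sigma> s e :: real and L :: "real measure"
  assumes \<sigma>: "\<sigma> > 0" "\<sigma> \<le> 1" and m: "even m" "m > 0"
    and L: "prob_space L" "sets L = sets borel"
    and "s \<ge> 0" and "e \<ge> 0"
    and nonzero: "emeasure L {u. u \<noteq> 0} \<le> ennreal s"
    and moment: "(\<integral>\<^sup>+u. indicator {u. u \<noteq> 0} u * ennreal ((2 * \<bar>u\<bar>) powr (1 / real m)) \<partial>L) \<le> ennreal e"
  shows "measure (gauss 0 \<sigma> \<Otimes>\<^sub>M gauss 0 1) (tail_event m \<sigma>)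
       - measure (convolution L (gauss 0 (\<sigma> / sqrt 2)) \<Otimes>\<^sub>M gauss 0 1) (tail_event m \<sigma>)
     \<ge> 1/1000 * ((\<sigma>/2) powr (1 / real m) / 3) - e - s * (3/2 * \<sigma> powr (1 / real m))"
proof -
  let ?G = "gauss 0 1" and ?H = "gauss 0 (\<sigma> / sqrt 2)" and ?C = "convolution L (gauss 0 (\<sigma> / sqrt 2))"
  interpret G: prob_space ?G by simp
  interpret Z: prob_space "gauss 0 \<sigma>" using \<sigma> by simp
  interpret H: prob_space ?H using \<sigma> by simp
  interpret L: prob_space L by fact
  interpret PZ: pair_prob_space "gauss 0 \<sigma>" ?G ..
  interpret PH: pair_prob_space ?H ?G ..
  interpret LH: pair_prob_space L ?H ..
  have "(\<lambda>(u, z). u + z) \<in> borel_measurable (L \<Otimes>\<^sub>M ?H)" using L(2) by measurable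
  then interpret C: prob_space ?C
    unfolding convolution_def by (rule LH.prob_space_distr)
  interpret PC: pair_prob_space ?C ?G ..
  define pZ where "pZ = measure (gauss 0 \<sigma> \<Otimes>\<^sub>M ?G) (tail_event m \<sigma>)"
  define pH where "pH = measure (?H \<Otimes>\<^sub>M ?G) (tail_event m \<sigma>)"
  define pC where "pC = measure (?C \<Otimes>\<^sub>M ?G) (tail_event m \<sigma>)"
  define d where "d = 1/1000 * ((\<sigma>/2) powr (1 / real m) / 3)"
  define b where "b = 3/2 * \<sigma> powr (1 / real m)"
  have nonneg: "0 \<le> pH" "0 \<le> pZ" "0 \<le> d" "0 \<le> b" "0 \<le> s * b"
    using \<open>s \<ge> 0\<close> by (simp_all add: pH_def pZ_def d_def b_def)
  have "ennreal pH + ennreal d \<le> ennreal pZ"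
    using tail_event_gauss_gain[OF \<sigma> m]
    by (simp add: pH_def pZ_def d_def PH.emeasure_eq_measure PZ.emeasure_eq_measure ennreal_mult'[symmetric])
  then have "pH + d \<le> pZ"
    using nonneg by (simp add: ennreal_plus[symmetric] ennreal_le_iff del: ennreal_plus)
  moreover have "ennreal pC \<le> ennreal pH + ennreal e + ennreal s * ennreal b"
    using tail_event_convolution_le[OF \<sigma>(1) m L nonzero moment]
    by (simp add: pC_def pH_def b_def PH.emeasure_eq_measure PC.emeasure_eq_measure)
  then have "pC \<le> pH + e + s * b"
    using nonneg \<open>e \<ge> 0\<close> \<open>s \<ge> 0\<close>
    by (simp add: ennreal_mult[symmetric] ennreal_plus[symmetric] ennreal_le_iff del: ennreal_plus)
  ultimately show ?thesis
    unfolding pZ_def[symmetric] pC_def[symmetric] d_def[symmetric] b_def[symmetric] by linarith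
qed

section \<open>The sparse part\<close>

lemma U_pmf_law:
  fixes nu \<sigma> :: real
  defines "p \<equiv> \<sigma> powr (2 * nu / (nu - 2))"
  defines "x0 \<equiv> \<sigma> / sqrt (6 * p)"
  assumes "\<sigma> > 0" and "3 * p \<le> 1"
  shows "set_pmf (U_pmf nu \<sigma>) \<subseteq> {- x0, 0, 2 * x0}"
    and "emeasure (measure_pmf (U_pmf nu \<sigma>)) {u. u \<noteq> 0} = ennreal (3 * p)"
proof -
  have "p > 0" using \<open>\<sigma> > 0\<close> by (simp add: p_def)
  then have "x0 > 0" using \<open>\<sigma> > 0\<close> by (simp add: x0_def)
  let ?xs = "[(- x0, 2 * p), (0, 1 - 3 * p), (2 * x0, p)]"
  have U: "U_pmf nu \<sigma> = pmf_of_list ?xs"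
    by (simp add: U_pmf_def Let_def p_def x0_def)
  have wf: "pmf_of_list_wf ?xs"
    using \<open>p > 0\<close> assms(4) by (intro pmf_of_list_wfI) auto
  show "set_pmf (U_pmf nu \<sigma>) \<subseteq> {- x0, 0, 2 * x0}"
    unfolding U using set_pmf_of_list[OF wf] by auto
  have "pmf (U_pmf nu \<sigma>) 0 = 1 - 3 * p"
    unfolding U using \<open>x0 > 0\<close> by (simp add: pmf_pmf_of_list[OF wf])
  moreover have "measure (measure_pmf (U_pmf nu \<sigma>)) {u. u \<noteq> 0}
      = 1 - measure (measure_pmf (U_pmf nu \<sigma>)) {0}"
    by (subst measure_pmf.prob_compl[symmetric]) (auto intro: arg_cong[where f="measure _"])
  ultimately have "measure (measure_pmf (U_pmf nu \<sigma>)) {u. u \<noteq> 0} = 3 * p"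
    by (simp add: measure_pmf_single)
  then show "emeasure (measure_pmf (U_pmf nu \<sigma>)) {u. u \<noteq> 0} = ennreal (3 * p)"
    by (simp add: measure_pmf.emeasure_eq_measure)
qed

lemma nn_integral_PiM_count:
  assumes "finite I" and M: "prob_space M" and A: "A \<in> sets M"
  shows "(\<integral>\<^sup>+x. (\<Sum>i\<in>I. indicator A (x i)) \<partial>PiM I (\<lambda>_. M)) = of_nat (card I) * emeasure M A"
proof -
  have "(\<integral>\<^sup>+x. indicator A (x i) \<partial>PiM I (\<lambda>_. M)) = emeasure M A" if "i \<in> I" for i
  proof -
    have "(\<integral>\<^sup>+x. indicator A (x i) \<partial>PiM I (\<lambda>_. M)) = (\<integral>\<^sup>+y. indicator A y \<partial>distr (PiM I (\<lambda>_. M)) M (\<lambda>x. x i))"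
      using A by (subst nn_integral_distr[OF measurable_component_singleton[OF that]]) auto
    also have "distr (PiM I (\<lambda>_. M)) M (\<lambda>x. x i) = M"
      using that M by (intro distr_PiM_component) auto
    finally show ?thesis using A by simp
  qed
  then show ?thesis
    using A by (simp add: nn_integral_sum)
qed

text \<open>Each nonzero value of \<open>U\<close> has modulus at most \<open>2 x\<^sub>0\<close>, so a normalised sum of such values is
  controlled by the number of nonzero terms; as that number is at least one, its root is bounded
  by the number itself.\<close>

lemma root_sparse_sum_le:
  fixes x :: "'i \<Rightarrow> real" and x0 c \<sigma> :: real
  assumes I: "finite I" and x: "\<And>i. i \<in> I \<Longrightarrow> x i \<in> {- x0, 0, 2 * x0}"
    and x0: "x0 > 0" and c: "c > 0" and \<sigma>: "\<sigma> > 0" and m: "m > 0"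
    and nz: "(\<Sum>i\<in>I. x i) \<noteq> 0"
  shows "(2 * \<bar>(\<Sum>i\<in>I. x i) / c\<bar>) powr (1 / real m)
     \<le> \<sigma> powr (1 / real m) * (1 + 4 * x0 / (\<sigma> * c)) * (\<Sum>i\<in>I. indicator {u. u \<noteq> 0} (x i))"
proof -
  define N where "N = (\<Sum>i\<in>I. indicator {u. u \<noteq> 0} (x i) :: real)"
  define K where "K = 4 * x0 / (\<sigma> * c)"
  have K0: "K > 0" using x0 c \<sigma> by (simp add: K_def)
  have "\<bar>x i\<bar> \<le> 2 * x0 * indicator {u. u \<noteq> 0} (x i)" if "i \<in> I" for i
    using x[OF that] x0 by (auto simp: indicator_def)
  then have "(\<Sum>i\<in>I. \<bar>x i\<bar>) \<le> (\<Sum>i\<in>I. 2 * x0 * indicator {u. u \<noteq> 0} (x i))"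
    by (rule sum_mono)
  then have sum_le: "\<bar>\<Sum>i\<in>I. x i\<bar> \<le> 2 * x0 * N"
    using sum_abs[of x I] unfolding N_def sum_distrib_left by linarith
  obtain i where i: "i \<in> I" "x i \<noteq> 0"
    using nz by (meson sum.neutral)
  have "indicator {u. u \<noteq> 0} (x i) \<le> N"
    unfolding N_def using i I by (intro member_le_sum) auto
  then have N1: "1 \<le> N" using i by simp
  have "2 * \<bar>(\<Sum>i\<in>I. x i) / c\<bar> = 2 * \<bar>\<Sum>i\<in>I. x i\<bar> / c" using c by simp
  also have "\<dots> \<le> 2 * (2 * x0 * N) / c"
    using sum_le c by (intro divide_right_mono) (auto simp: mult.commute mult.left_commute)
  also have "\<dots> = \<sigma> * (K * N)" using \<sigma> c by (simp add: K_def field_simps)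
  finally have "(2 * \<bar>(\<Sum>i\<in>I. x i) / c\<bar>) powr (1 / real m) \<le> (\<sigma> * (K * N)) powr (1 / real m)"
    by (intro powr_mono2) auto
  also have "\<dots> = \<sigma> powr (1 / real m) * (K * N) powr (1 / real m)"
    using \<sigma> K0 N1 by (subst powr_mult) auto
  also have "(K * N) powr (1 / real m) \<le> max 1 (K * N)"
    using K0 N1 m by (intro powr_inverse_le_max_one) auto
  also have "max 1 (K * N) \<le> (1 + K) * N"
  proof -
    have "0 \<le> K * N" using K0 N1 by simp
    then show ?thesis using N1 by (simp add: algebra_simps)
  qed
  finally show ?thesis
    using \<sigma> by (simp add: K_def N_def mult.assoc mult_left_mono)
qed

lemma indicator_nonzero_sum_le:
  assumes "finite I"
  shows "indicator {u. u \<noteq> 0} ((\<Sum>i\<in>I. x i) / c) \<le> (\<Sum>i\<in>I. indicator {u::real. u \<noteq> 0} (x i) :: ennreal)"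
proof (cases "(\<Sum>i\<in>I. x i) / c = 0")
  case False
  then obtain i where "i \<in> I" "x i \<noteq> 0" by (metis div_0 sum.neutral)
  then have "indicator {u::real. u \<noteq> 0} (x i) \<le> (\<Sum>i\<in>I. indicator {u::real. u \<noteq> 0} (x i) :: ennreal)"
    using assms by (intro member_le_sum) auto
  with \<open>x i \<noteq> 0\<close> False show ?thesis by simp
qed simp

lemma nn_integral_U_nonzero_count:
  fixes nu \<sigma> :: real
  defines "p \<equiv> \<sigma> powr (2 * nu / (nu - 2))"
  assumes "\<sigma> > 0" and "3 * p \<le> 1" and "finite I"
  shows "(\<integral>\<^sup>+x. (\<Sum>i\<in>I. indicator {u. u \<noteq> 0} (x i)) \<partial>PiM I (\<lambda>_. measure_pmf (U_pmf nu \<sigma>)))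
    = ennreal (3 * p * card I)"
  using U_pmf_law(2)[of \<sigma> nu] assms
  by (simp add: nn_integral_PiM_count measure_pmf.prob_space_axioms ennreal_of_nat_eq_real_of_nat
      ennreal_mult'[symmetric] mult.commute)

lemma emeasure_sparse_law_nonzero:
  fixes nu \<sigma> c :: real and I :: "'i set"
  defines "p \<equiv> \<sigma> powr (2 * nu / (nu - 2))"
  assumes "\<sigma> > 0" and "3 * p \<le> 1" and "finite I"
  shows "emeasure (distr (PiM I (\<lambda>_. measure_pmf (U_pmf nu \<sigma>))) borel (\<lambda>x. (\<Sum>i\<in>I. x i) / c))
      {u. u \<noteq> 0} \<le> ennreal (3 * p * card I)"
proof -
  let ?P = "PiM I (\<lambda>_. measure_pmf (U_pmf nu \<sigma>))"
  have "{u::real. u \<noteq> 0} \<in> sets borel"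
    using borel_closed[OF closed_singleton, of "0::real"] by (simp add: Compl_eq[symmetric] sets.compl_sets)
  then have "emeasure (distr ?P borel (\<lambda>x. (\<Sum>i\<in>I. x i) / c)) {u. u \<noteq> 0}
      = (\<integral>\<^sup>+x. indicator {u. u \<noteq> 0} ((\<Sum>i\<in>I. x i) / c) \<partial>?P)"
    by (simp add: nn_integral_indicator[symmetric] nn_integral_distr borel_measurable_PiM_sum_div
        del: nn_integral_indicator)
  also have "\<dots> \<le> (\<integral>\<^sup>+x. (\<Sum>i\<in>I. indicator {u. u \<noteq> 0} (x i)) \<partial>?P)"
    using assms(4) by (intro nn_integral_mono indicator_nonzero_sum_le)
  also have "\<dots> = ennreal (3 * p * card I)"
    using nn_integral_U_nonzero_count[of \<sigma> nu I] assms(2-4) by (simp add: p_def)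
  finally show ?thesis .
qed

lemma nn_integral_sparse_law_root:
  fixes nu \<sigma> c :: real and I :: "'i set" and m :: nat
  defines "p \<equiv> \<sigma> powr (2 * nu / (nu - 2))"
  defines "x0 \<equiv> \<sigma> / sqrt (6 * p)"
  assumes \<sigma>: "\<sigma> > 0" and p3: "3 * p \<le> 1" and I: "finite I" and c: "c > 0" and m: "m > 0"
  shows "(\<integral>\<^sup>+u. indicator {u. u \<noteq> 0} u * ennreal ((2 * \<bar>u\<bar>) powr (1 / real m))
      \<partial>distr (PiM I (\<lambda>_. measure_pmf (U_pmf nu \<sigma>))) borel (\<lambda>x. (\<Sum>i\<in>I. x i) / c))
    \<le> ennreal (\<sigma> powr (1 / real m) * (1 + 4 * x0 / (\<sigma> * c)) * (3 * p * card I))"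
proof -
  let ?P = "PiM I (\<lambda>_. measure_pmf (U_pmf nu \<sigma>))"
  let ?nz = "{u::real. u \<noteq> 0}"
  define S where "S = (\<lambda>x::'i \<Rightarrow> real. (\<Sum>i\<in>I. x i) / c)"
  define C where "C = \<sigma> powr (1 / real m) * (1 + 4 * x0 / (\<sigma> * c))"
  have "p > 0" using \<sigma> by (simp add: p_def)
  then have "x0 > 0" using \<sigma> by (simp add: x0_def)
  then have "C \<ge> 0" using \<sigma> c by (simp add: C_def)
  have AE_support: "AE x in ?P. \<forall>i\<in>I. x i \<in> {- x0, 0, 2 * x0}"
    using I U_pmf_law(1)[OF \<sigma> p3[unfolded p_def], folded p_def x0_def]
    by (intro eventually_ball_finite ballI AE_PiM_component)
      (auto simp: AE_measure_pmf_iff measure_pmf.prob_space_axioms)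
  have "(\<integral>\<^sup>+u. indicator ?nz u * ennreal ((2 * \<bar>u\<bar>) powr (1 / real m)) \<partial>distr ?P borel S)
      = (\<integral>\<^sup>+x. indicator ?nz (S x) * ennreal ((2 * \<bar>S x\<bar>) powr (1 / real m)) \<partial>?P)"
    unfolding S_def by (subst nn_integral_distr) (auto intro: borel_measurable_PiM_sum_div)
  also have "\<dots> \<le> (\<integral>\<^sup>+x. ennreal C * (\<Sum>i\<in>I. indicator ?nz (x i)) \<partial>?P)"
  proof (intro nn_integral_mono_AE, use AE_support in \<open>eventually_elim\<close>)
    fix x :: "'i \<Rightarrow> real" assume x: "\<forall>i\<in>I. x i \<in> {- x0, 0, 2 * x0}"
    show "indicator ?nz (S x) * ennreal ((2 * \<bar>S x\<bar>) powr (1 / real m)) \<le> ennreal C * (\<Sum>i\<in>I. indicator ?nz (x i))"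
    proof (cases "S x = 0")
      case False
      then have "(\<Sum>i\<in>I. x i) \<noteq> 0" by (simp add: S_def)
      from root_sparse_sum_le[OF I _ \<open>x0 > 0\<close> c \<sigma> m this] x
      have "ennreal ((2 * \<bar>S x\<bar>) powr (1 / real m)) \<le> ennreal (C * (\<Sum>i\<in>I. indicator ?nz (x i)))"
        by (intro ennreal_leI) (simp add: S_def C_def)
      also have "\<dots> = ennreal C * (\<Sum>i\<in>I. indicator ?nz (x i))"
        using \<open>C \<ge> 0\<close> by (simp add: ennreal_mult ennreal_indicator[symmetric] sum_nonneg)
      finally show ?thesis using False by simp
    qed simp
  qed
  also have "\<dots> = ennreal C * ennreal (3 * p * card I)"
    using nn_integral_U_nonzero_count[OF \<sigma> p3[unfolded p_def] I]
    by (subst nn_integral_cmult) (auto simp: p_def)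
  finally show ?thesis
    using \<open>C \<ge> 0\<close> \<open>p > 0\<close> by (simp add: S_def C_def ennreal_mult)
qed

lemma sparse_law_estimates:
  fixes nu \<sigma> :: real and n m :: nat
  defines "L \<equiv> distr (PiM {..<n} (\<lambda>_. measure_pmf (U_pmf nu \<sigma>))) borel
      (\<lambda>x. (\<Sum>i<n. x i) / (sqrt 2 * sqrt (real n)))"
  assumes n: "n \<ge> 1" and \<sigma>: "\<sigma> > 0" and m: "m > 0"
    and sparse: "\<sigma> powr (2 * nu / (nu - 2)) * real n = 3 / 10^12"
  shows "prob_space L"
    and "emeasure L {u. u \<noteq> 0} \<le> ennreal (9 / 10^12)"
    and "(\<integral>\<^sup>+u. indicator {u. u \<noteq> 0} u * ennreal ((2 * \<bar>u\<bar>) powr (1 / real m)) \<partial>L)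
      \<le> ennreal (\<sigma> powr (1 / real m) * (1 + 4 * 10^6 / 6) * (9 / 10^12))"
proof -
  define p where "p = \<sigma> powr (2 * nu / (nu - 2))"
  define x0 where "x0 = \<sigma> / sqrt (6 * p)"
  define c where "c = sqrt 2 * sqrt (real n)"
  have pn: "p * real n = 3 / 10^12" using sparse by (simp add: p_def)
  have "p > 0" using \<sigma> by (simp add: p_def)
  have "c > 0" using n by (simp add: c_def)
  have "p * 1 \<le> p * real n" using \<open>p > 0\<close> n by (intro mult_left_mono) auto
  then have "3 * p \<le> 1" using pn by simp
  have "sqrt (6 * p) * c = sqrt ((6 / 10^6)^2)"
    by (simp add: c_def real_sqrt_mult[symmetric] mult.assoc pn power2_eq_square)
  also have "\<dots> = 6 / 10^6" by simp
  finally have K: "4 * x0 / (\<sigma> * c) = 4 * 10^6 / 6"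
    using \<sigma> \<open>p > 0\<close> \<open>c > 0\<close> by (simp add: x0_def field_simps)
  have s: "3 * p * real n = 9 / 10^12" using pn by simp
  have L_c: "L = distr (PiM {..<n} (\<lambda>_. measure_pmf (U_pmf nu \<sigma>))) borel (\<lambda>x. (\<Sum>i<n. x i) / c)"
    by (simp add: L_def c_def)
  show "prob_space L" unfolding L_def
    by (intro prob_space.prob_space_distr prob_space_PiM measure_pmf.prob_space_axioms
        borel_measurable_PiM_sum_div) simp
  show "emeasure L {u. u \<noteq> 0} \<le> ennreal (9 / 10^12)"
    using emeasure_sparse_law_nonzero[of \<sigma> nu "{..<n}" c, folded p_def, OF \<sigma> \<open>3 * p \<le> 1\<close> finite_lessThan]
    unfolding L_c by (simp only: card_lessThan s)
  show "(\<integral>\<^sup>+u. indicator {u. u \<noteq> 0} u * ennreal ((2 * \<bar>u\<bar>) powr (1 / real m)) \<partial>L)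
      \<le> ennreal (\<sigma> powr (1 / real m) * (1 + 4 * 10^6 / 6) * (9 / 10^12))"
    using nn_integral_sparse_law_root[of \<sigma> nu "{..<n}" c m, folded p_def x0_def,
        OF \<sigma> \<open>3 * p \<le> 1\<close> finite_lessThan \<open>c > 0\<close> m]
    unfolding L_c by (simp only: card_lessThan s K)
qed

text \<open>The loss caused by the sparse part is about \<open>6\<cdot>10\<^sup>-\<^sup>6 \<sigma>\<^bsup>1/m\<^esup>\<close>, negligible against the gain
  \<open>(\<sigma>/2)\<^bsup>1/m\<^esup>/3000\<close>.\<close>

lemma prob_below_gap:
  fixes nu \<sigma> :: real
  assumes n: "n \<ge> 1" and \<sigma>: "\<sigma> > 0" "\<sigma> \<le> 1" and m: "even m" "m > 0"
    and sparse: "\<sigma> powr (2 * nu / (nu - 2)) * real n = 3 / 10^12"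
  shows "\<sigma> powr (1 / real m) / 12000
    \<le> prob_below (law_Z \<sigma> n) n m (-2 * \<sigma>) - prob_below (law_X nu \<sigma> n) n m (-2 * \<sigma>)"
proof -
  define L where "L = distr (PiM {..<n} (\<lambda>_. measure_pmf (U_pmf nu \<sigma>))) borel
      (\<lambda>x. (\<Sum>i<n. x i) / (sqrt 2 * sqrt (real n)))"
  define A where "A = \<sigma> powr (1 / real m)"
  have "A > 0" using \<sigma> by (simp add: A_def)
  note estimates = sparse_law_estimates[OF n \<sigma>(1) m(2) sparse, folded L_def A_def]
  have "measure (gauss 0 \<sigma> \<Otimes>\<^sub>M gauss 0 1) (tail_event m \<sigma>)
      - measure (convolution L (gauss 0 (\<sigma> / sqrt 2)) \<Otimes>\<^sub>M gauss 0 1) (tail_event m \<sigma>)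
    \<ge> 1/1000 * ((\<sigma>/2) powr (1 / real m) / 3) - A * (1 + 4 * 10^6 / 6) * (9 / 10^12) - 9 / 10^12 * (3/2 * A)"
    unfolding A_def using \<open>A > 0\<close> estimates
    by (intro tail_event_gap[OF \<sigma> m]) (simp_all add: L_def A_def)
  moreover have "prob_below (law_Z \<sigma> n) n m (-2 * \<sigma>) = measure (gauss 0 \<sigma> \<Otimes>\<^sub>M gauss 0 1) (tail_event m \<sigma>)"
    by (rule prob_below_law_Z[OF n \<sigma>(1)])
  moreover have "prob_below (law_X nu \<sigma> n) n m (-2 * \<sigma>)
      = measure (convolution L (gauss 0 (\<sigma> / sqrt 2)) \<Otimes>\<^sub>M gauss 0 1) (tail_event m \<sigma>)"
    unfolding L_def by (rule prob_below_law_X[OF n \<sigma>(1)])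
  moreover have "A / 2 \<le> (\<sigma>/2) powr (1 / real m)"
  proof -
    have "(1/2::real) \<le> (1/2) powr (1 / real m)" using m by (intro le_powr_inverse) auto
    then have "A * (1/2) \<le> A * (1/2) powr (1 / real m)" using \<open>A > 0\<close> by simp
    then show ?thesis using \<sigma> by (simp add: A_def powr_divide)
  qed
  moreover have "A * (1 + 4 * 10^6 / 6) * (9 / 10^12) + 9 / 10^12 * (3/2 * A) \<le> A * (1 / 12000)"
    using \<open>A > 0\<close> by (simp add: algebra_simps)
  ultimately show ?thesis unfolding A_def[symmetric] by linarith
qed

lemma prob_below_gap_sigma_n:
  fixes nu :: real and n m :: nat
  defines "\<sigma>0 \<equiv> (3 / 10^12) powr ((nu - 2) / (2 * nu))"
  defines "\<sigma> \<equiv> min (\<sigma>0 * real n powr (- (nu - 2) / (2 * nu))) 1"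
  assumes nu: "nu > 2" and n: "n \<ge> 1" and m: "even m" "m > 0"
  shows "3 * \<sigma> powr (2 * nu / (nu - 2)) \<le> 1"
    and "\<sigma>0 / 12000 * real n powr (- (nu - 2) / (2 * nu * real m))
      \<le> prob_below (law_Z \<sigma> n) n m (- 2 * \<sigma>) - prob_below (law_X nu \<sigma> n) n m (- 2 * \<sigma>)"
proof -
  define a where "a = (nu - 2) / (2 * nu)"
  define q where "q = 2 * nu / (nu - 2)"
  define t where "t = real n powr (- a)"
  have "a > 0" and "a * q = 1" using nu by (simp_all add: a_def q_def field_simps)
  have "0 < \<sigma>0" "\<sigma>0 \<le> 1" using \<open>a > 0\<close> by (simp_all add: \<sigma>0_def a_def powr_le1)
  have "1 \<le> real n powr a" using n \<open>a > 0\<close> by (intro ge_one_powr_ge_zero) auto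
  then have "0 < t" "t \<le> 1" using n by (simp_all add: t_def powr_minus_divide)
  then have \<sigma>_eq: "\<sigma> = \<sigma>0 * t" using \<open>0 < \<sigma>0\<close> \<open>\<sigma>0 \<le> 1\<close>
    by (simp add: \<sigma>_def t_def a_def mult_le_one minus_divide_left)
  have "0 < \<sigma>" "\<sigma> \<le> 1" using \<open>0 < \<sigma>0\<close> \<open>\<sigma>0 \<le> 1\<close> \<open>0 < t\<close> \<open>t \<le> 1\<close>
    by (simp_all add: \<sigma>_eq mult_le_one)
  have "\<sigma> powr q = \<sigma>0 powr q * t powr q"
    using \<open>0 < \<sigma>0\<close> \<open>0 < t\<close> by (simp add: \<sigma>_eq powr_mult)
  also have "\<dots> = (3 / 10^12) powr (a * q) * real n powr (- (a * q))"
    unfolding \<sigma>0_def t_def a_def by (simp add: powr_powr)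
  finally have sparse: "\<sigma> powr q * real n = 3 / 10^12"
    using n by (simp add: \<open>a * q = 1\<close> powr_neg_one)
  have "\<sigma> powr q * 1 \<le> \<sigma> powr q * real n" using n by (intro mult_left_mono) auto
  then show "3 * \<sigma> powr (2 * nu / (nu - 2)) \<le> 1" using sparse by (simp add: q_def)
  have "\<sigma>0 * real n powr (- (nu - 2) / (2 * nu * real m)) \<le> \<sigma> powr (1 / real m)"
    using m \<open>0 < \<sigma>0\<close> \<open>\<sigma>0 \<le> 1\<close> \<open>0 < t\<close>
    by (simp add: \<sigma>_eq t_def a_def powr_mult powr_powr le_powr_inverse minus_divide_left)
  also have "\<sigma> powr (1 / real m) / 12000
      \<le> prob_below (law_Z \<sigma> n) n m (- 2 * \<sigma>) - prob_below (law_X nu \<sigma> n) n m (- 2 * \<sigma>)"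
    by (intro prob_below_gap n m \<open>0 < \<sigma>\<close> \<open>\<sigma> \<le> 1\<close> sparse[unfolded q_def])
  finally show "\<sigma>0 / 12000 * real n powr (- (nu - 2) / (2 * nu * real m))
      \<le> prob_below (law_Z \<sigma> n) n m (- 2 * \<sigma>) - prob_below (law_X nu \<sigma> n) n m (- 2 * \<sigma>)"
    by simp
qed

theorem lemmaG1:
  fixes nu :: real and m :: "nat \<Rightarrow> nat"
  assumes nu: "nu > 2"
    and m_even: "\<And>n. even (m n) \<and> m n > 0"
    and m_small: "(\<lambda>n. real (m n)) \<in> o(\<lambda>n. ln (real n))"
  shows "\<exists>c sigma0 :: real. \<exists>N :: nat. c > 0 \<and> sigma0 > 0 \<and>
    (\<forall>n\<ge>N. let sn = min (sigma0 * real n powr (- (nu - 2) / (2 * nu))) 1 in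
       3 * sn powr (2 * nu / (nu - 2)) \<le> 1 \<and>
       prob_below (law_Z sn n) n (m n) (- 2 * sn) - prob_below (law_X nu sn n) n (m n) (- 2 * sn)
         \<ge> c * real n powr (- (nu - 2) / (2 * nu * real (m n))))"
proof -
  define \<sigma>0 :: real where "\<sigma>0 = (3 / 10^12) powr ((nu - 2) / (2 * nu))"
  have "\<sigma>0 > 0" by (simp add: \<sigma>0_def)
  then show ?thesis
    using prob_below_gap_sigma_n[OF nu, of _ "m _"] m_even
    by (intro exI[of _ "\<sigma>0 / 12000"] exI[of _ \<sigma>0] exI[of _ 1]) (auto simp: Let_def \<sigma>0_def)
qed

end
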